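(* Let $k$ be an algebraically closed field of characteristic zero, $S=k[x_0,\dots,x_n]$, and let $X\subset\mathbb P^n$ be a projective variety which is a chain of closed subvarieties $X_1,\dots,X_\ell$, with saturated homogeneous ideal $I_X=\bigcap_{i=1}^\ell I_{X_i}$, where $I_{X_i}$ is the saturated homogeneous ideal of $X_i$. Suppose that there is a sequence of integers $n_0=0<n_1<\cdots<n_\ell=n$ such that for each $i$, \[ X_i\subset\{x_0=\cdots=x_{n_{i-1}-1}=0,\ x_{n_i+1}=\cdots=x_n=0\}. \] For $i=1,\dots,\ell-1$ let $T_i=\langle x_{n_{i-1}},\dots,x_{n_i-1}\rangle\cdot\langle x_{n_i+1},\dots,x_n\rangle\subset S$, let $T=\sum_{i=1}^{\ell-1}T_i$, and for a positive integer $m$ let $\tau=\sum_{x^\alpha\in T_m}\alpha\in\mathbb Z^{n+1}$, the sum running over all degree $m$ monomials of $T$. Then, for every positive integer $m$ (at least the Castelnuovo–Mumford regularity of the ideals involved), \[ \mathcal P_m(I_X)=\tau+\sum_{i=1}^{\ell}\mathcal P_m\big(I_{X_i}\cap k[x_{n_{i-1}},\dots,x_{n_i}]\big), \] where the sum is the Minkowski sum of polytopes in $\mathbb R^{n+1}$.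
   Context: A chain of subvarieties means $X=\bigcup_{i=1}^\ell X_i$ and $X_i\cap X_j\neq\emptyset$ if and only if $|i-j|=1$. For a homogeneous ideal $J$ in a polynomial ring $k[x_a,\dots,x_b]$ ($0\le a\le b\le n$) and a positive integer $m$, the $m$th state polytope is $\mathcal P_m(J)=\mathrm{Conv}\{\sum_{x^\alpha\in \mathrm{in}_\prec(J)_m}\alpha \mid \prec \text{ a monomial order on } k[x_a,\dots,x_b]\}$, where $\mathrm{in}_\prec(J)_m$ is the set of degree $m$ monomials in the initial ideal of $J$ and the exponent vectors $\alpha$ are regarded as vectors in $\mathbb R^{n+1}$ whose coordinates with index outside $[a,b]$ are zero. (The paper uses this for $m\ge \mathrm{reg}(J)$, the Castelnuovo–Mumford regularity.) *)

theory Defs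
  imports "HOL-Library.Poly_Mapping" "HOL-Computational_Algebra.Polynomial"
begin

text \<open>Multivariate polynomials in variables x_0, x_1, ... over 'a: finitely supported maps
  from monomials (exponent vectors) to coefficients (convolution product).\<close>
type_synonym 'a mpoly = "(nat \<Rightarrow>\<^sub>0 nat) \<Rightarrow>\<^sub>0 'a"

definition mdeg :: "(nat \<Rightarrow>\<^sub>0 nat) \<Rightarrow> nat" where
  "mdeg \<alpha> = (\<Sum>j\<in>Poly_Mapping.keys \<alpha>. Poly_Mapping.lookup \<alpha> j)"

definition mdvd :: "(nat \<Rightarrow>\<^sub>0 nat) \<Rightarrow> (nat \<Rightarrow>\<^sub>0 nat) \<Rightarrow> bool" where
  "mdvd \<alpha> \<beta> \<longleftrightarrow> (\<forall>j. Poly_Mapping.lookup \<alpha> j \<le> Poly_Mapping.lookup \<beta> j)"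

definition ring_in :: "nat set \<Rightarrow> ('a::comm_ring_1) mpoly set" where
  "ring_in V = {f. \<forall>\<alpha>\<in>Poly_Mapping.keys f. Poly_Mapping.keys \<alpha> \<subseteq> V}"

definition homog :: "('a::comm_ring_1) mpoly \<Rightarrow> nat \<Rightarrow> bool" where
  "homog f d \<longleftrightarrow> (\<forall>\<alpha>\<in>Poly_Mapping.keys f. mdeg \<alpha> = d)"

definition homog_int :: "('a::comm_ring_1) mpoly \<Rightarrow> int \<Rightarrow> bool" where
  "homog_int f d \<longleftrightarrow> f = 0 \<or> (d \<ge> 0 \<and> homog f (nat d))"

definition eval :: "('a::comm_ring_1) mpoly \<Rightarrow> (nat \<Rightarrow> 'a) \<Rightarrow> 'a" where
  "eval f p = (\<Sum>\<alpha>\<in>Poly_Mapping.keys f. Poly_Mapping.lookup f \<alpha> * (\<Prod>j\<in>Poly_Mapping.keys \<alpha>. p j ^ Poly_Mapping.lookup \<alpha> j))"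

definition aff :: "nat \<Rightarrow> (nat \<Rightarrow> 'a::zero) set" where
  "aff n = {p. \<forall>j>n. p j = 0}"

text \<open>A closed subset X of P^n, represented by its affine cone in k^{n+1}: the common
  zero locus of a set of homogeneous polynomials of S = k[x_0..x_n].\<close>
definition proj_closed :: "nat \<Rightarrow> (nat \<Rightarrow> 'a::comm_ring_1) set \<Rightarrow> bool" where
  "proj_closed n X \<longleftrightarrow> (\<exists>F. F \<subseteq> ring_in {0..n} \<and> (\<forall>f\<in>F. \<exists>d. homog f d) \<and>
      X = {p\<in>aff n. \<forall>f\<in>F. eval f p = 0})"

text \<open>The saturated homogeneous ideal I_X \<subseteq> S of the projective set with cone X:
  all polynomials of S vanishing at every point of X (i.e. every nonzero point of the cone).\<close>
definition ideal_of :: "nat \<Rightarrow> (nat \<Rightarrow> 'a::comm_ring_1) set \<Rightarrow> 'a mpoly set" where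
  "ideal_of n X = {f\<in>ring_in {0..n}. \<forall>p\<in>X. p \<noteq> (\<lambda>_. 0) \<longrightarrow> eval f p = 0}"

definition mat_apply :: "(nat \<Rightarrow> nat \<Rightarrow> ('a::comm_ring_1) mpoly) \<Rightarrow> nat \<Rightarrow> nat \<Rightarrow> 'a mpoly list \<Rightarrow> 'a mpoly list" where
  "mat_apply M rows cols v = map (\<lambda>r. \<Sum>c<cols. M r c * v ! c) [0..<rows]"

definition vecs_in :: "nat set \<Rightarrow> nat \<Rightarrow> ('a::comm_ring_1) mpoly list set" where
  "vecs_in V r = {v. length v = r \<and> set v \<subseteq> ring_in V}"

text \<open>A finite graded free resolution of the homogeneous ideal I of k[x_j : j \<in> V]:
  0 \<rightarrow> F_p \<rightarrow> ... \<rightarrow> F_1 \<rightarrow> F_0 \<rightarrow> I \<rightarrow> 0 with F_i = direct sum over c of S(-degs i ! c);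
  F_0 \<rightarrow> I sends the basis vectors to the homogeneous generators gens, F_i \<rightarrow> F_{i-1} is given
  by the matrix M i (entry (r,c) homogeneous of degree degs i ! c - degs (i-1) ! r).
  reg(I) \<le> m iff there is such a resolution with degs i ! c - i \<le> m for all i, c
  (the minimal resolution is a direct summand of any graded free resolution).\<close>
definition graded_resolution ::
  "nat set \<Rightarrow> ('a::comm_ring_1) mpoly set \<Rightarrow> nat \<Rightarrow> (nat \<Rightarrow> nat list) \<Rightarrow> 'a mpoly list
     \<Rightarrow> (nat \<Rightarrow> nat \<Rightarrow> nat \<Rightarrow> 'a mpoly) \<Rightarrow> bool" where
  "graded_resolution V I p degs gens M \<longleftrightarrow>
     length gens = length (degs 0) \<and> set gens \<subseteq> ring_in V \<and>
     (\<forall>j<length gens. homog (gens ! j) (degs 0 ! j)) \<and>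
     I = {(\<Sum>j<length gens. a ! j * gens ! j) | a. a \<in> vecs_in V (length gens)} \<and>
     (\<forall>i\<in>{1..p}. \<forall>r<length (degs (i - 1)). \<forall>c<length (degs i).
         M i r c \<in> ring_in V \<and> homog_int (M i r c) (int (degs i ! c) - int (degs (i - 1) ! r))) \<and>
     {a \<in> vecs_in V (length gens). (\<Sum>j<length gens. a ! j * gens ! j) = 0} =
       (if p = 0 then {replicate (length gens) 0}
        else mat_apply (M 1) (length (degs 0)) (length (degs 1)) ` vecs_in V (length (degs 1))) \<and>
     (\<forall>i\<in>{1..p}. {v \<in> vecs_in V (length (degs i)).
          mat_apply (M i) (length (degs (i - 1))) (length (degs i)) v = replicate (length (degs (i - 1))) 0} =
       (if i = p then {replicate (length (degs i)) 0}
        else mat_apply (M (Suc i)) (length (degs i)) (length (degs (Suc i))) ` vecs_in V (length (degs (Suc i)))))"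

definition reg_le :: "nat set \<Rightarrow> ('a::comm_ring_1) mpoly set \<Rightarrow> int \<Rightarrow> bool" where
  "reg_le V I m \<longleftrightarrow> (\<exists>p degs gens M. graded_resolution V I p degs gens M \<and>
      (\<forall>i\<le>p. \<forall>c<length (degs i). int (degs i ! c) - int i \<le> m))"

definition mono_order :: "nat set \<Rightarrow> ((nat \<Rightarrow>\<^sub>0 nat) \<Rightarrow> (nat \<Rightarrow>\<^sub>0 nat) \<Rightarrow> bool) \<Rightarrow> bool" where
  "mono_order V ord \<longleftrightarrow> (let M = {\<alpha>. Poly_Mapping.keys \<alpha> \<subseteq> V} in
     (\<forall>\<alpha>\<in>M. ord \<alpha> \<alpha>) \<and>
     (\<forall>\<alpha>\<in>M. \<forall>\<beta>\<in>M. ord \<alpha> \<beta> \<and> ord \<beta> \<alpha> \<longrightarrow> \<alpha> = \<beta>) \<and>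
     (\<forall>\<alpha>\<in>M. \<forall>\<beta>\<in>M. \<forall>\<gamma>\<in>M. ord \<alpha> \<beta> \<and> ord \<beta> \<gamma> \<longrightarrow> ord \<alpha> \<gamma>) \<and>
     (\<forall>\<alpha>\<in>M. \<forall>\<beta>\<in>M. ord \<alpha> \<beta> \<or> ord \<beta> \<alpha>) \<and>
     (\<forall>\<alpha>\<in>M. \<forall>\<beta>\<in>M. \<forall>\<gamma>\<in>M. ord \<alpha> \<beta> \<longrightarrow> ord (\<alpha> + \<gamma>) (\<beta> + \<gamma>)) \<and>
     (\<forall>A\<subseteq>M. A \<noteq> {} \<longrightarrow> (\<exists>\<alpha>\<in>A. \<forall>\<beta>\<in>A. ord \<alpha> \<beta>)))"

definition lm :: "((nat \<Rightarrow>\<^sub>0 nat) \<Rightarrow> (nat \<Rightarrow>\<^sub>0 nat) \<Rightarrow> bool) \<Rightarrow> ('a::zero) mpoly \<Rightarrow> nat \<Rightarrow>\<^sub>0 nat" where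
  "lm ord f = (THE \<alpha>. \<alpha> \<in> Poly_Mapping.keys f \<and> (\<forall>\<beta>\<in>Poly_Mapping.keys f. ord \<beta> \<alpha>))"

text \<open>exponents of the degree-m monomials of in_ord(J), J an ideal of k[x_j : j \<in> V]:
  in_ord(J) is generated by the leading monomials of the nonzero elements of J\<close>
definition init_deg :: "nat set \<Rightarrow> ((nat \<Rightarrow>\<^sub>0 nat) \<Rightarrow> (nat \<Rightarrow>\<^sub>0 nat) \<Rightarrow> bool) \<Rightarrow> ('a::zero) mpoly set
     \<Rightarrow> nat \<Rightarrow> (nat \<Rightarrow>\<^sub>0 nat) set" where
  "init_deg V ord J m = {\<beta>. Poly_Mapping.keys \<beta> \<subseteq> V \<and> mdeg \<beta> = m \<and> (\<exists>f\<in>J. f \<noteq> 0 \<and> mdvd (lm ord f) \<beta>)}"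

definition vecsum :: "(nat \<Rightarrow>\<^sub>0 nat) set \<Rightarrow> nat \<Rightarrow> real" where
  "vecsum A = (\<lambda>j. real (\<Sum>\<alpha>\<in>A. Poly_Mapping.lookup \<alpha> j))"

definition conv :: "(nat \<Rightarrow> real) set \<Rightarrow> (nat \<Rightarrow> real) set" where
  "conv P = {x. \<exists>F u. finite F \<and> F \<noteq> {} \<and> F \<subseteq> P \<and> (\<forall>y\<in>F. u y \<ge> 0) \<and> (\<Sum>y\<in>F. u y) = 1 \<and>
                  x = (\<lambda>j. \<Sum>y\<in>F. u y * y j)}"

definition state_polytope :: "nat set \<Rightarrow> ('a::zero) mpoly set \<Rightarrow> nat \<Rightarrow> (nat \<Rightarrow> real) set" where
  "state_polytope V J m = conv {vecsum (init_deg V ord J m) | ord. mono_order V ord}"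

definition msum :: "nat set \<Rightarrow> (nat \<Rightarrow> (nat \<Rightarrow> real) set) \<Rightarrow> (nat \<Rightarrow> real) set" where
  "msum I P = {x. \<exists>y. (\<forall>i\<in>I. y i \<in> P i) \<and> x = (\<lambda>j. \<Sum>i\<in>I. y i j)}"

text \<open>exponents of the degree-m monomials of T = \<Sum>_{i=1}^{l-1} <x_{n_{i-1}},...,x_{n_i - 1}> * <x_{n_i+1},...,x_n>
  (a monomial ideal: x^\<alpha> \<in> T iff x_j x_j' | x^\<alpha> for some such i, j, j')\<close>
definition T_deg :: "nat \<Rightarrow> nat \<Rightarrow> (nat \<Rightarrow> nat) \<Rightarrow> nat \<Rightarrow> (nat \<Rightarrow>\<^sub>0 nat) set" where
  "T_deg n l ns m = {\<alpha>. Poly_Mapping.keys \<alpha> \<subseteq> {0..n} \<and> mdeg \<alpha> = m \<and>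
     (\<exists>i\<in>{1..l-1}. \<exists>j\<in>{ns (i-1)..<ns i}. \<exists>j'\<in>{ns i + 1..n}. Poly_Mapping.lookup \<alpha> j \<ge> 1 \<and> Poly_Mapping.lookup \<alpha> j' \<ge> 1)}"

end

theory Submission
  imports Defs "HOL-Library.FuncSet"
begin

text \<open>
  For any monomial order, the degree-m part of in(I_X) is the disjoint union of the degree-m
  monomials of T and of the degree-m parts of the initial ideals of the block ideals
  J_i = I_{X_i} \<inter> k[x_{n_{i-1}},...,x_{n_i}]: a monomial outside T is supported in a single
  block, and there the elements of I_X can be cut down to elements of J_i with the same leading
  monomial. A nonzero point of X_i \<inter> X_{i+1} lies on the axis of the one variable shared by the
  two blocks, so neither J_i nor J_{i+1} contains a pure power of it, which makes the union
  disjoint. Summing exponents, every vertex of P_m(I_X) is \<tau> plus a sum of vertices of the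
  P_m(J_i). Conversely, any family of orders on the blocks is realised by a single order on S:
  compare degrees, then the projections of the monomials to the successive blocks (variables
  left of a block collapsed to its first one, right of it to its last one). Taking convex hulls,
  which commute with Minkowski sums and translations, gives the identity. No regularity bound
  is used: the identity holds for every m > 0.
\<close>

abbreviation keys :: "('b \<Rightarrow>\<^sub>0 'c::zero) \<Rightarrow> 'b set" where
  "keys \<equiv> Poly_Mapping.keys"

abbreviation lookup :: "('b \<Rightarrow>\<^sub>0 'c::zero) \<Rightarrow> 'b \<Rightarrow> 'c" where
  "lookup \<equiv> Poly_Mapping.lookup"

lemma lookup_le_mdeg: "lookup a j \<le> mdeg a"
proof (cases "j \<in> keys a")
  case True then show ?thesis unfolding mdeg_def by (intro member_le_sum) auto
next
  case False then show ?thesis by (simp add: in_keys_iff)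
qed

lemma sum_lookup_eq_mdeg: "finite A \<Longrightarrow> keys a \<subseteq> A \<Longrightarrow> (\<Sum>j\<in>A. lookup a j) = mdeg a"
  unfolding mdeg_def by (rule sum.mono_neutral_right) (auto simp: in_keys_iff)

lemma sum_lookup_eq_0: "keys a \<inter> A = {} \<Longrightarrow> (\<Sum>j\<in>A. lookup a j) = (0::nat)"
  by (rule sum.neutral) (auto simp: in_keys_iff)

lemma mdeg_add: "mdeg (a + b) = mdeg a + mdeg b"
proof -
  have fin: "finite (keys a \<union> keys b)" by simp
  have "mdeg (a + b) = (\<Sum>j\<in>keys a \<union> keys b. lookup (a + b) j)"
    using sum_lookup_eq_mdeg[OF fin, of "a + b"] keys_add[of a b] by simp
  also have "\<dots> = (\<Sum>j\<in>keys a \<union> keys b. lookup a j) + (\<Sum>j\<in>keys a \<union> keys b. lookup b j)"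
    by (simp add: lookup_add sum.distrib)
  also have "\<dots> = mdeg a + mdeg b" using sum_lookup_eq_mdeg[OF fin] by simp
  finally show ?thesis .
qed

lemma mdvd_keys_subset: "mdvd a b \<Longrightarrow> keys a \<subseteq> keys b"
  unfolding mdvd_def by (metis in_keys_iff le_zero_eq subsetI)

lemma finite_monomials_deg: "finite {a. keys a \<subseteq> {0..n} \<and> mdeg a = d}"
proof -
  define of_fun :: "(nat \<Rightarrow> nat) \<Rightarrow> nat \<Rightarrow>\<^sub>0 nat" where
    "of_fun f = Abs_poly_mapping (\<lambda>j. if j \<le> n then f j else 0)" for f
  have "{a. keys a \<subseteq> {0..n} \<and> mdeg a = d} \<subseteq> of_fun ` (PiE {0..n} (\<lambda>_. {0..d}))"
  proof
    fix a assume a: "a \<in> {a. keys a \<subseteq> {0..n} \<and> mdeg a = d}"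
    let ?f = "restrict (lookup a) {0..n}"
    have fin: "finite {j. (if j \<le> n then ?f j else 0) \<noteq> 0}"
      by (rule finite_subset[of _ "{0..n}"]) (auto split: if_splits)
    have "lookup (of_fun ?f) j = lookup a j" for j
      unfolding of_fun_def using fin a by (auto simp: in_keys_iff)
    then have "of_fun ?f = a" by (intro poly_mapping_eqI) simp
    moreover have "?f \<in> PiE {0..n} (\<lambda>_. {0..d})" using a lookup_le_mdeg by auto
    ultimately show "a \<in> of_fun ` (PiE {0..n} (\<lambda>_. {0..d}))" by (metis image_eqI)
  qed
  moreover have "finite (of_fun ` (PiE {0..n} (\<lambda>_. {0..d})))"
    by (intro finite_imageI finite_PiE) auto
  ultimately show ?thesis by (rule finite_subset)
qed

lemma finite_init_deg: "V \<subseteq> {0..n} \<Longrightarrow> finite (init_deg V ord J m)"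
  by (rule finite_subset[OF _ finite_monomials_deg[of n m]]) (auto simp: init_deg_def)

lemma finite_T_deg: "finite (T_deg n l ns m)"
  by (rule finite_subset[OF _ finite_monomials_deg[of n m]]) (auto simp: T_deg_def)

section \<open>Monomial orders and leading monomials\<close>

lemma finite_total_has_least:
  assumes "finite S" "S \<noteq> {}" "\<forall>x\<in>S. \<forall>y\<in>S. R x y \<or> R y x"
    "\<forall>x\<in>S. \<forall>y\<in>S. \<forall>z\<in>S. R x y \<and> R y z \<longrightarrow> R x z"
  shows "\<exists>x\<in>S. \<forall>y\<in>S. R x y"
  using assms
proof (induction S rule: finite_ne_induct)
  case (singleton x) then show ?case by blast
next
  case (insert x F)
  obtain y where y: "y \<in> F" "\<forall>z\<in>F. R y z" using insert.IH insert.prems by blast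
  show ?case
  proof (cases "R x y")
    case True
    then have "\<forall>z\<in>insert x F. R x z" using y insert.prems by blast
    then show ?thesis by blast
  next
    case False
    then have "\<forall>z\<in>insert x F. R y z" using y insert.prems by blast
    then show ?thesis using y(1) by blast
  qed
qed

lemma mono_order_iff:
  "mono_order V ord \<longleftrightarrow>
     (\<forall>a. keys a \<subseteq> V \<longrightarrow> ord a a) \<and>
     (\<forall>a b. keys a \<subseteq> V \<longrightarrow> keys b \<subseteq> V \<longrightarrow> ord a b \<longrightarrow> ord b a \<longrightarrow> a = b) \<and>
     (\<forall>a b c. keys a \<subseteq> V \<longrightarrow> keys b \<subseteq> V \<longrightarrow> keys c \<subseteq> V \<longrightarrow> ord a b \<longrightarrow> ord b c \<longrightarrow> ord a c) \<and>
     (\<forall>a b. keys a \<subseteq> V \<longrightarrow> keys b \<subseteq> V \<longrightarrow> ord a b \<or> ord b a) \<and>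
     (\<forall>a b c. keys a \<subseteq> V \<longrightarrow> keys b \<subseteq> V \<longrightarrow> keys c \<subseteq> V \<longrightarrow> ord a b \<longrightarrow> ord (a + c) (b + c)) \<and>
     (\<forall>A. A \<subseteq> {a. keys a \<subseteq> V} \<longrightarrow> A \<noteq> {} \<longrightarrow> (\<exists>a\<in>A. \<forall>b\<in>A. ord a b))"
  unfolding mono_order_def Let_def Ball_def mem_Collect_eq by (simp add: imp_conjL)

lemma mono_orderD:
  assumes "mono_order V ord"
  shows mono_order_refl: "keys a \<subseteq> V \<Longrightarrow> ord a a"
    and mono_order_antisym: "keys a \<subseteq> V \<Longrightarrow> keys b \<subseteq> V \<Longrightarrow> ord a b \<Longrightarrow> ord b a \<Longrightarrow> a = b"
    and mono_order_trans:
      "keys a \<subseteq> V \<Longrightarrow> keys b \<subseteq> V \<Longrightarrow> keys c \<subseteq> V \<Longrightarrow> ord a b \<Longrightarrow> ord b c \<Longrightarrow> ord a c"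
    and mono_order_total: "keys a \<subseteq> V \<Longrightarrow> keys b \<subseteq> V \<Longrightarrow> ord a b \<or> ord b a"
    and mono_order_add:
      "keys a \<subseteq> V \<Longrightarrow> keys b \<subseteq> V \<Longrightarrow> keys c \<subseteq> V \<Longrightarrow> ord a b \<Longrightarrow> ord (a + c) (b + c)"
    and mono_order_wf: "A \<subseteq> {a. keys a \<subseteq> V} \<Longrightarrow> A \<noteq> {} \<Longrightarrow> \<exists>a\<in>A. \<forall>b\<in>A. ord a b"
  using assms unfolding mono_order_iff by metis+

lemma mono_order_subset:
  assumes mo: "mono_order V ord" and W: "W \<subseteq> V"
  shows "mono_order W ord"
  unfolding mono_order_iff
proof (intro conjI allI impI)
  fix A :: "(nat \<Rightarrow>\<^sub>0 nat) set" assume "A \<subseteq> {a. keys a \<subseteq> W}" "A \<noteq> {}"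
  then show "\<exists>a\<in>A. \<forall>b\<in>A. ord a b" using mono_order_wf[OF mo, of A] W by auto
qed (use mono_orderD[OF mo] W in \<open>meson subset_trans\<close>)+

lemma lm_eqI:
  fixes f :: "('a::zero) mpoly"
  assumes mo: "mono_order V ord" and f: "\<forall>a\<in>keys f. keys a \<subseteq> V"
    and a: "a \<in> keys f" "\<forall>b\<in>keys f. ord b a"
  shows "lm ord f = a"
  unfolding lm_def
proof (rule the_equality)
  show "a \<in> keys f \<and> (\<forall>b\<in>keys f. ord b a)" using a by auto
next
  fix x assume "x \<in> keys f \<and> (\<forall>b\<in>keys f. ord b x)"
  then show "x = a" using a mono_order_antisym[OF mo] f by blast
qed

lemma lm_greatest:
  fixes f :: "('a::zero) mpoly"
  assumes mo: "mono_order V ord" and f: "f \<noteq> 0" "\<forall>a\<in>keys f. keys a \<subseteq> V"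
  shows "lm ord f \<in> keys f" "\<forall>b\<in>keys f. ord b (lm ord f)"
proof -
  have "\<exists>a\<in>keys f. \<forall>b\<in>keys f. ord b a"
  proof (rule finite_total_has_least[of "keys f" "\<lambda>a b. ord b a"])
    show "\<forall>a\<in>keys f. \<forall>b\<in>keys f. ord b a \<or> ord a b" using mono_order_total[OF mo] f(2) by blast
    show "\<forall>a\<in>keys f. \<forall>b\<in>keys f. \<forall>c\<in>keys f. ord b a \<and> ord c b \<longrightarrow> ord c a"
      using mono_order_trans[OF mo] f(2) by blast
  qed (use f(1) in auto)
  then obtain a where "a \<in> keys f" "\<forall>b\<in>keys f. ord b a" by blast
  with lm_eqI[OF mo f(2) this] show "lm ord f \<in> keys f" "\<forall>b\<in>keys f. ord b (lm ord f)" by auto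
qed

lemma lm_cong:
  fixes f :: "('a::zero) mpoly"
  shows "\<forall>a\<in>keys f. \<forall>b\<in>keys f. ord a b = ord' a b \<Longrightarrow> lm ord f = lm ord' f"
  unfolding lm_def by (intro arg_cong[where f=The] ext) auto

section \<open>Evaluation, cones and vanishing ideals\<close>

definition mon_val :: "(nat \<Rightarrow>\<^sub>0 nat) \<Rightarrow> (nat \<Rightarrow> 'a::comm_ring_1) \<Rightarrow> 'a" where
  "mon_val a p = (\<Prod>j\<in>keys a. p j ^ lookup a j)"

lemma eval_eq_sum_mon_val: "eval f p = (\<Sum>a\<in>keys f. lookup f a * mon_val a p)"
  unfolding eval_def mon_val_def by simp

lemma mon_val_eq_0:
  assumes "j \<in> keys a" "p j = 0"
  shows "mon_val a p = 0"
proof -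
  have "p j ^ lookup a j = 0" using assms by (simp add: in_keys_iff power_0_left)
  then show ?thesis unfolding mon_val_def using assms(1) by (meson finite_keys prod_zero)
qed

lemma eval_eq_0_if_monomials_vanish:
  "\<forall>a\<in>keys f. \<exists>j\<in>keys a. p j = 0 \<Longrightarrow> eval f p = 0"
  unfolding eval_eq_sum_mon_val using mon_val_eq_0
  by (metis (no_types, lifting) mult_zero_right sum.neutral)

lemma mon_val_scale: "mon_val a (\<lambda>j. t * p j) = t ^ mdeg a * mon_val a p"
  unfolding mon_val_def mdeg_def power_mult_distrib prod.distrib power_sum by simp

lemma eval_scale: "eval f (\<lambda>j. t * p j) = (\<Sum>a\<in>keys f. (lookup f a * mon_val a p) * t ^ mdeg a)"
  unfolding eval_eq_sum_mon_val mon_val_scale by (intro sum.cong) (auto simp: ac_simps)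

lemma eval_scale_homog: "homog f d \<Longrightarrow> eval f (\<lambda>j. t * p j) = t ^ d * eval f p"
  unfolding eval_scale eval_eq_sum_mon_val homog_def sum_distrib_left
  by (intro sum.cong) (auto simp: ac_simps)

lemma proj_closed_scale: "proj_closed n X \<Longrightarrow> p \<in> X \<Longrightarrow> (\<lambda>j. t * p j) \<in> X"
  unfolding proj_closed_def aff_def by (auto simp: eval_scale_homog)

definition mpoly_filter :: "('a::zero) mpoly \<Rightarrow> ((nat \<Rightarrow>\<^sub>0 nat) \<Rightarrow> bool) \<Rightarrow> 'a mpoly" where
  "mpoly_filter f P = Abs_poly_mapping (\<lambda>a. if P a then lookup f a else 0)"

lemma lookup_mpoly_filter: "lookup (mpoly_filter f P) = (\<lambda>a. if P a then lookup f a else 0)"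
proof -
  have "finite {a. (if P a then lookup f a else 0) \<noteq> 0}"
    by (rule finite_subset[OF _ finite_lookup[of f]]) (auto split: if_splits)
  then show ?thesis unfolding mpoly_filter_def by simp
qed

lemma keys_mpoly_filter: "keys (mpoly_filter f P) = {a \<in> keys f. P a}"
  by (auto simp: in_keys_iff lookup_mpoly_filter split: if_splits)

lemma eval_mpoly_filter:
  "eval (mpoly_filter f P) p = (\<Sum>a\<in>{a \<in> keys f. P a}. lookup f a * mon_val a p)"
  unfolding eval_eq_sum_mon_val keys_mpoly_filter
  by (intro sum.cong) (auto simp: lookup_mpoly_filter)

definition homog_part :: "('a::zero) mpoly \<Rightarrow> nat \<Rightarrow> 'a mpoly" where
  "homog_part f d = mpoly_filter f (\<lambda>a. mdeg a = d)"

lemma sum_powers_vanishing_coeff_eq_0: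
  fixes c :: "'b \<Rightarrow> 'a::field_char_0"
  assumes A: "finite A" and vanish: "\<forall>t. t \<noteq> 0 \<longrightarrow> (\<Sum>a\<in>A. c a * t ^ e a) = 0"
  shows "(\<Sum>a\<in>A. if e a = d then c a else 0) = 0"
proof -
  define Q where "Q = (\<Sum>a\<in>A. monom (c a) (e a))"
  have poly_Q: "poly Q t = (\<Sum>a\<in>A. c a * t ^ e a)" for t
    unfolding Q_def poly_sum poly_monom by simp
  have "Q = 0"
  proof (rule ccontr)
    assume "Q \<noteq> 0"
    then have "finite {t. poly Q t = 0}" by (rule poly_roots_finite)
    moreover have "(UNIV::'a set) \<subseteq> insert 0 {t. poly Q t = 0}" using vanish poly_Q by auto
    ultimately show False using infinite_UNIV_char_0 by (meson finite_insert finite_subset)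
  qed
  then have "coeff Q d = 0" by simp
  then show ?thesis unfolding Q_def coeff_sum coeff_monom by simp
qed

lemma ideal_ofD: "f \<in> ideal_of n X \<Longrightarrow> p \<in> X \<Longrightarrow> p \<noteq> (\<lambda>_. 0) \<Longrightarrow> eval f p = 0"
  unfolding ideal_of_def by blast

text \<open>The vanishing ideal of a cone is homogeneous: restricted to a line through the origin,
  an element is a polynomial in the scalar vanishing off 0, so each of its homogeneous parts
  vanishes as well.\<close>

lemma ideal_of_homog_part:
  fixes X :: "(nat \<Rightarrow> 'a::field_char_0) set"
  assumes X: "proj_closed n X" and f: "f \<in> ideal_of n X"
  shows "homog_part f d \<in> ideal_of n X"
proof -
  have "homog_part f d \<in> ring_in {0..n}"
    using f unfolding ideal_of_def ring_in_def homog_part_def by (auto simp: keys_mpoly_filter)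
  moreover have "eval (homog_part f d) p = 0" if p: "p \<in> X" "p \<noteq> (\<lambda>_. 0)" for p
  proof -
    have "(\<Sum>a\<in>keys f. (lookup f a * mon_val a p) * t ^ mdeg a) = 0" if t: "t \<noteq> 0" for t
    proof -
      have "(\<lambda>j. t * p j) \<noteq> (\<lambda>_. 0)" using p(2) t by (metis mult_eq_0_iff)
      then have "eval f (\<lambda>j. t * p j) = 0"
        using ideal_ofD[OF f proj_closed_scale[OF X p(1)]] by blast
      then show ?thesis unfolding eval_scale .
    qed
    then have "(\<Sum>a\<in>keys f. if mdeg a = d then lookup f a * mon_val a p else 0) = 0"
      by (intro sum_powers_vanishing_coeff_eq_0) auto
    then show ?thesis unfolding homog_part_def eval_mpoly_filter by (simp add: sum.inter_filter)
  qed
  ultimately show ?thesis unfolding ideal_of_def by blast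
qed

lemma eval_axis_point:
  assumes q: "\<forall>j. j \<noteq> s \<longrightarrow> q j = 0"
  shows "eval h q = (\<Sum>a\<in>{a\<in>keys h. keys a \<subseteq> {s}}. lookup h a * q s ^ lookup a s)"
proof -
  have "eval h q = (\<Sum>a\<in>{a\<in>keys h. keys a \<subseteq> {s}}. lookup h a * mon_val a q)"
    unfolding eval_eq_sum_mon_val
  proof (rule sum.mono_neutral_right)
    show "\<forall>a\<in>keys h - {a\<in>keys h. keys a \<subseteq> {s}}. lookup h a * mon_val a q = 0"
    proof
      fix a assume "a \<in> keys h - {a\<in>keys h. keys a \<subseteq> {s}}"
      then obtain j where "j \<in> keys a" "j \<noteq> s" by blast
      then show "lookup h a * mon_val a q = 0" using mon_val_eq_0[of j a q] q by simp
    qed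
  qed auto
  also have "\<dots> = (\<Sum>a\<in>{a\<in>keys h. keys a \<subseteq> {s}}. lookup h a * q s ^ lookup a s)"
  proof (intro sum.cong refl)
    fix a assume "a \<in> {a\<in>keys h. keys a \<subseteq> {s}}"
    then have "keys a = {} \<or> keys a = {s}" by blast
    then show "lookup h a * mon_val a q = lookup h a * q s ^ lookup a s"
      unfolding mon_val_def by (auto simp: in_keys_iff)
  qed
  finally show ?thesis .
qed

text \<open>If a cone contains a nonzero point of the x_s-axis, then it contains the whole axis and
  the pure powers of x_s in an element of its ideal form a univariate polynomial vanishing
  on all of k - {0}.\<close>

lemma ideal_of_no_pure_power:
  fixes X :: "(nat \<Rightarrow> 'a::field_char_0) set"
  assumes X: "proj_closed n X" and h: "h \<in> ideal_of n X" and r: "r \<in> X" "r \<noteq> (\<lambda>_. 0)"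
    and r_axis: "\<forall>j. j \<noteq> s \<longrightarrow> r j = 0"
  shows "\<forall>a\<in>keys h. \<not> keys a \<subseteq> {s}"
proof (rule ccontr)
  assume "\<not> (\<forall>a\<in>keys h. \<not> keys a \<subseteq> {s})"
  then obtain a0 where a0: "a0 \<in> keys h" "keys a0 \<subseteq> {s}" by blast
  define A where "A = {a\<in>keys h. keys a \<subseteq> {s}}"
  have rs: "r s \<noteq> 0" using r(2) r_axis by (metis ext)
  have "(\<Sum>a\<in>A. lookup h a * t ^ lookup a s) = 0" if t: "t \<noteq> 0" for t
  proof -
    define q where "q = (\<lambda>j. (t / r s) * r j)"
    have q: "q \<in> X" "q s = t" "\<forall>j. j \<noteq> s \<longrightarrow> q j = 0"
      unfolding q_def using proj_closed_scale[OF X r(1), of "t / r s"] rs r_axis by auto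
    then have "q \<noteq> (\<lambda>_. 0)" using t by metis
    then have "eval h q = 0" using ideal_ofD[OF h q(1)] by blast
    then show ?thesis using eval_axis_point[OF q(3)] q(2) unfolding A_def by simp
  qed
  then have "(\<Sum>a\<in>A. if lookup a s = lookup a0 s then lookup h a else 0) = 0"
    by (intro sum_powers_vanishing_coeff_eq_0) (auto simp: A_def)
  moreover have "lookup a s = lookup a0 s \<longleftrightarrow> a = a0" if "a \<in> A" for a
    using that a0(2) unfolding A_def
    by (metis (no_types, lifting) in_keys_iff mem_Collect_eq poly_mapping_eqI singletonD subset_eq)
  then have "(\<Sum>a\<in>A. if lookup a s = lookup a0 s then lookup h a else 0) = lookup h a0"
    using a0 by (simp add: A_def sum.delta' cong: if_cong)
  ultimately show False using a0(1) by (simp add: in_keys_iff)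
qed

text \<open>The homogeneous part of f of the degree of its leading monomial is again in the ideal and
  has the same leading monomial.\<close>

lemma init_deg_ideal_of_homog:
  fixes X :: "(nat \<Rightarrow> 'a::field_char_0) set"
  assumes X: "proj_closed n X" and mo: "mono_order V ord"
  shows "init_deg V ord (ideal_of n X \<inter> ring_in V) m =
    {b. keys b \<subseteq> V \<and> mdeg b = m \<and>
        (\<exists>f\<in>ideal_of n X \<inter> ring_in V. f \<noteq> 0 \<and> (\<exists>d. homog f d) \<and> mdvd (lm ord f) b)}"
    (is "_ = ?H")
proof
  show "?H \<subseteq> init_deg V ord (ideal_of n X \<inter> ring_in V) m" unfolding init_deg_def by blast
next
  show "init_deg V ord (ideal_of n X \<inter> ring_in V) m \<subseteq> ?H"
  proof
    fix b assume "b \<in> init_deg V ord (ideal_of n X \<inter> ring_in V) m"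
    then obtain f where f: "f \<in> ideal_of n X" "f \<in> ring_in V" "f \<noteq> 0" "mdvd (lm ord f) b"
      and b: "keys b \<subseteq> V" "mdeg b = m"
      unfolding init_deg_def by blast
    have f_V: "\<forall>a\<in>keys f. keys a \<subseteq> V" using f(2) unfolding ring_in_def by blast
    define g where "g = homog_part f (mdeg (lm ord f))"
    have keys_g: "keys g = {a \<in> keys f. mdeg a = mdeg (lm ord f)}"
      unfolding g_def homog_part_def keys_mpoly_filter ..
    have lm_g: "lm ord f \<in> keys g" using keys_g lm_greatest(1)[OF mo f(3) f_V] by blast
    have "lm ord g = lm ord f"
      by (rule lm_eqI[OF mo]) (use keys_g f_V lm_g lm_greatest(2)[OF mo f(3) f_V] in auto)
    moreover have "g \<in> ideal_of n X" unfolding g_def by (rule ideal_of_homog_part[OF X f(1)])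
    moreover have "g \<in> ring_in V" "homog g (mdeg (lm ord f))" "g \<noteq> 0"
      using keys_g f_V lm_g unfolding ring_in_def homog_def by auto
    ultimately show "b \<in> ?H" using b f(4) by auto
  qed
qed

lemma init_deg_ideal_of_cong:
  fixes X :: "(nat \<Rightarrow> 'a::field_char_0) set"
  assumes X: "proj_closed n X" and mo: "mono_order V ord" and mo': "mono_order V ord'"
    and agree: "\<And>a b. keys a \<subseteq> V \<Longrightarrow> keys b \<subseteq> V \<Longrightarrow> mdeg a = mdeg b \<Longrightarrow> ord a b = ord' a b"
  shows "init_deg V ord (ideal_of n X \<inter> ring_in V) m = init_deg V ord' (ideal_of n X \<inter> ring_in V) m"
proof -
  have "lm ord f = lm ord' f" if "f \<in> ring_in V" "homog f d" for f d
    using that agree unfolding ring_in_def homog_def by (intro lm_cong) auto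
  then show ?thesis unfolding init_deg_ideal_of_homog[OF X mo] init_deg_ideal_of_homog[OF X mo']
    by (intro Collect_cong) fastforce
qed

section \<open>Convex hulls and Minkowski sums\<close>

lemma conv_weighted_sum:
  assumes K: "finite K" and w: "\<forall>k\<in>K. w k \<ge> 0" "(\<Sum>k\<in>K. w k) = 1" and p: "\<forall>k\<in>K. p k \<in> P"
  shows "(\<lambda>j. \<Sum>k\<in>K. w k * p k j) \<in> conv P"
proof -
  define F where "F = p ` K"
  define u where "u y = (\<Sum>k\<in>{k\<in>K. p k = y}. w k)" for y
  have "finite F" "F \<noteq> {}" "F \<subseteq> P" unfolding F_def using K w(2) p by auto
  moreover have "\<forall>y\<in>F. u y \<ge> 0" unfolding u_def using w(1) by (auto intro: sum_nonneg)
  moreover have "(\<Sum>y\<in>F. u y) = 1"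
    unfolding u_def F_def using sum.image_gen[OF K, of w p] w(2) by simp
  moreover have "(\<lambda>j. \<Sum>k\<in>K. w k * p k j) = (\<lambda>j. \<Sum>y\<in>F. u y * y j)"
  proof
    fix j
    have "(\<Sum>k\<in>K. w k * p k j) = (\<Sum>y\<in>F. \<Sum>k\<in>{k\<in>K. p k = y}. w k * p k j)"
      unfolding F_def by (rule sum.image_gen[OF K])
    also have "\<dots> = (\<Sum>y\<in>F. u y * y j)"
      unfolding u_def sum_distrib_right by (intro sum.cong refl) auto
    finally show "(\<Sum>k\<in>K. w k * p k j) = (\<Sum>y\<in>F. u y * y j)" .
  qed
  ultimately show ?thesis unfolding conv_def by blast
qed

lemma convE:
  assumes "x \<in> conv P"
  obtains F u where "finite F" "F \<subseteq> P" "\<forall>y\<in>F. u y \<ge> 0" "(\<Sum>y\<in>F. u y) = 1"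
    "x = (\<lambda>j. \<Sum>y\<in>F. u y * y j)"
  using assms unfolding conv_def by blast

lemma conv_translate: "conv ((\<lambda>x j. t j + x j) ` W) = (\<lambda>x j. t j + x j) ` conv W"
proof
  show "conv ((\<lambda>x j. t j + x j) ` W) \<subseteq> (\<lambda>x j. t j + x j) ` conv W"
  proof
    fix x assume "x \<in> conv ((\<lambda>x j. t j + x j) ` W)"
    then obtain F u where F: "finite F" "F \<subseteq> (\<lambda>x j. t j + x j) ` W" "\<forall>y\<in>F. u y \<ge> 0"
      "(\<Sum>y\<in>F. u y) = 1" "x = (\<lambda>j. \<Sum>y\<in>F. u y * y j)" by (rule convE)
    define g where "g y = (\<lambda>j. y j - t j)" for y :: "nat \<Rightarrow> real"
    have "\<forall>y\<in>F. g y \<in> W" using F(2) unfolding g_def by auto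
    then have "(\<lambda>j. \<Sum>y\<in>F. u y * g y j) \<in> conv W" by (rule conv_weighted_sum[OF F(1,3,4)])
    moreover have "x = (\<lambda>x j. t j + x j) (\<lambda>j. \<Sum>y\<in>F. u y * g y j)"
      unfolding F(5) g_def right_diff_distrib sum_subtractf sum_distrib_right[symmetric] F(4)
      by simp
    ultimately show "x \<in> (\<lambda>x j. t j + x j) ` conv W"
      using image_eqI[of x "\<lambda>x j. t j + x j" "\<lambda>j. \<Sum>y\<in>F. u y * g y j"] by simp
  qed
next
  show "(\<lambda>x j. t j + x j) ` conv W \<subseteq> conv ((\<lambda>x j. t j + x j) ` W)"
  proof
    fix x assume "x \<in> (\<lambda>x j. t j + x j) ` conv W"
    then obtain z where z: "z \<in> conv W" "x = (\<lambda>j. t j + z j)" by blast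
    from z(1) obtain F u where F: "finite F" "F \<subseteq> W" "\<forall>y\<in>F. u y \<ge> 0"
      "(\<Sum>y\<in>F. u y) = 1" "z = (\<lambda>j. \<Sum>y\<in>F. u y * y j)" by (rule convE)
    have "\<forall>y\<in>F. (\<lambda>j. t j + y j) \<in> (\<lambda>x j. t j + x j) ` W" using F(2) by blast
    then have "(\<lambda>j. \<Sum>y\<in>F. u y * (t j + y j)) \<in> conv ((\<lambda>x j. t j + x j) ` W)"
      using conv_weighted_sum[OF F(1,3,4)] by simp
    moreover have "x = (\<lambda>j. \<Sum>y\<in>F. u y * (t j + y j))"
      unfolding z(2) F(5) distrib_left sum.distrib sum_distrib_right[symmetric] F(4) by simp
    ultimately show "x \<in> conv ((\<lambda>x j. t j + x j) ` W)" by simp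
  qed
qed

lemma conv_msum_subset: "conv (msum I P) \<subseteq> msum I (\<lambda>i. conv (P i))"
proof
  fix x assume "x \<in> conv (msum I P)"
  then obtain F u where F: "finite F" "F \<subseteq> msum I P" "\<forall>y\<in>F. u y \<ge> 0"
    "(\<Sum>y\<in>F. u y) = 1" "x = (\<lambda>j. \<Sum>y\<in>F. u y * y j)" by (rule convE)
  have "\<forall>z\<in>F. \<exists>y. (\<forall>i\<in>I. y i \<in> P i) \<and> z = (\<lambda>j. \<Sum>i\<in>I. y i j)"
    using F(2) unfolding msum_def by blast
  then obtain Y where Y: "\<forall>z\<in>F. (\<forall>i\<in>I. Y z i \<in> P i) \<and> z = (\<lambda>j. \<Sum>i\<in>I. Y z i j)"
    by metis
  define y where "y i = (\<lambda>j. \<Sum>z\<in>F. u z * Y z i j)" for i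
  have "\<forall>i\<in>I. y i \<in> conv (P i)"
  proof
    fix i assume "i \<in> I"
    then have "\<forall>z\<in>F. Y z i \<in> P i" using Y by blast
    then show "y i \<in> conv (P i)" unfolding y_def by (rule conv_weighted_sum[OF F(1,3,4)])
  qed
  moreover have "x = (\<lambda>j. \<Sum>i\<in>I. y i j)"
  proof
    fix j
    have "x j = (\<Sum>z\<in>F. u z * (\<Sum>i\<in>I. Y z i j))"
      using F(5) Y by (metis (no_types, lifting) sum.cong)
    also have "\<dots> = (\<Sum>i\<in>I. \<Sum>z\<in>F. u z * Y z i j)"
      unfolding sum_distrib_left by (rule sum.swap)
    finally show "x j = (\<Sum>i\<in>I. y i j)" unfolding y_def by simp
  qed
  ultimately show "x \<in> msum I (\<lambda>i. conv (P i))" unfolding msum_def by blast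
qed

lemma msum_empty: "msum {} P = {(\<lambda>j. 0)}"
  unfolding msum_def by auto

lemma msum_insertI:
  assumes "finite I" "i \<notin> I" "a \<in> P i" "b \<in> msum I P"
  shows "(\<lambda>j. a j + b j) \<in> msum (insert i I) P"
proof -
  obtain y where y: "\<forall>i\<in>I. y i \<in> P i" "b = (\<lambda>j. \<Sum>i\<in>I. y i j)"
    using assms(4) unfolding msum_def by blast
  have "\<forall>i'\<in>insert i I. (y(i := a)) i' \<in> P i'" using y(1) assms(3) by auto
  moreover have "(\<lambda>j. a j + b j) = (\<lambda>j. \<Sum>i'\<in>insert i I. (y(i := a)) i' j)"
  proof
    fix j
    have "(\<Sum>i'\<in>I. (y(i := a)) i' j) = (\<Sum>i'\<in>I. y i' j)"
      using assms(2) by (intro sum.cong) auto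
    then show "a j + b j = (\<Sum>i'\<in>insert i I. (y(i := a)) i' j)"
      using assms(1,2) y(2) by simp
  qed
  ultimately show ?thesis unfolding msum_def by blast
qed

lemma msum_insertE:
  assumes "finite I" "i \<notin> I" "x \<in> msum (insert i I) P"
  obtains a b where "a \<in> P i" "b \<in> msum I P" "x = (\<lambda>j. a j + b j)"
proof -
  obtain y where y: "\<forall>i'\<in>insert i I. y i' \<in> P i'" "x = (\<lambda>j. \<Sum>i'\<in>insert i I. y i' j)"
    using assms(3) unfolding msum_def by blast
  have "(\<lambda>j. \<Sum>i'\<in>I. y i' j) \<in> msum I P" using y(1) unfolding msum_def by blast
  moreover have "x = (\<lambda>j. y i j + (\<Sum>i'\<in>I. y i' j))" using y(2) assms(1,2) by simp
  ultimately show ?thesis using that y(1) by blast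
qed

lemma conv_add:
  assumes a: "a \<in> conv A" and b: "b \<in> conv B"
    and AB: "\<forall>x\<in>A. \<forall>y\<in>B. (\<lambda>j. x j + y j) \<in> C"
  shows "(\<lambda>j. a j + b j) \<in> conv C"
proof -
  obtain F1 u1 where F1: "finite F1" "F1 \<subseteq> A" "\<forall>y\<in>F1. u1 y \<ge> 0"
    "(\<Sum>y\<in>F1. u1 y) = 1" "a = (\<lambda>j. \<Sum>y\<in>F1. u1 y * y j)" using a by (rule convE)
  obtain F2 u2 where F2: "finite F2" "F2 \<subseteq> B" "\<forall>y\<in>F2. u2 y \<ge> 0"
    "(\<Sum>y\<in>F2. u2 y) = 1" "b = (\<lambda>j. \<Sum>y\<in>F2. u2 y * y j)" using b by (rule convE)
  define w where "w xy = u1 (fst xy) * u2 (snd xy)" for xy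
  define p where "p xy = (\<lambda>j. fst xy j + snd xy j)" for xy :: "(nat \<Rightarrow> real) \<times> (nat \<Rightarrow> real)"
  have sum_prod: "(\<Sum>xy\<in>F1 \<times> F2. f xy) = (\<Sum>x\<in>F1. \<Sum>y\<in>F2. f (x, y))" for f :: "_ \<Rightarrow> real"
    by (simp add: sum.cartesian_product)
  have "\<forall>xy\<in>F1 \<times> F2. w xy \<ge> 0" unfolding w_def using F1(3) F2(3) by auto
  moreover have "(\<Sum>xy\<in>F1 \<times> F2. w xy) = 1"
    unfolding sum_prod w_def using F1(4) F2(4) by (simp add: sum_product[symmetric])
  moreover have "\<forall>xy\<in>F1 \<times> F2. p xy \<in> C" unfolding p_def using AB F1(2) F2(2) by auto
  ultimately have "(\<lambda>j. \<Sum>xy\<in>F1 \<times> F2. w xy * p xy j) \<in> conv C"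
    using F1(1) F2(1) by (intro conv_weighted_sum) auto
  moreover have "(\<lambda>j. a j + b j) = (\<lambda>j. \<Sum>xy\<in>F1 \<times> F2. w xy * p xy j)"
  proof
    fix j
    have "(\<Sum>xy\<in>F1 \<times> F2. w xy * p xy j) = (\<Sum>x\<in>F1. \<Sum>y\<in>F2. u2 y * (u1 x * x j) + u1 x * (u2 y * y j))"
      unfolding sum_prod w_def p_def by (simp add: algebra_simps)
    also have "\<dots> = (\<Sum>x\<in>F1. u1 x * x j) + (\<Sum>y\<in>F2. u2 y * y j)"
      unfolding sum.distrib sum_distrib_left[symmetric] sum_distrib_right[symmetric]
      using F1(4) F2(4)
      by (simp add: sum.swap[of _ F1 F2])
    finally show "a j + b j = (\<Sum>xy\<in>F1 \<times> F2. w xy * p xy j)" using F1(5) F2(5) by simp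
  qed
  ultimately show ?thesis by simp
qed

lemma msum_conv_subset: "finite I \<Longrightarrow> msum I (\<lambda>i. conv (P i)) \<subseteq> conv (msum I P)"
proof (induction I rule: finite_induct)
  case empty
  have "(\<lambda>j. \<Sum>k\<in>{()}. 1 * (\<lambda>j. 0::real) j) \<in> conv {(\<lambda>j. 0)}"
    by (rule conv_weighted_sum) auto
  then show ?case unfolding msum_empty by simp
next
  case (insert i I)
  show ?case
  proof
    fix x assume "x \<in> msum (insert i I) (\<lambda>i. conv (P i))"
    then obtain a b where ab: "a \<in> conv (P i)" "b \<in> msum I (\<lambda>i. conv (P i))" "x = (\<lambda>j. a j + b j)"
      using msum_insertE[OF insert(1,2)] by blast
    have "(\<lambda>j. a j + b j) \<in> conv (msum (insert i I) P)"
      using ab(2) insert.IH by (intro conv_add[OF ab(1)]) (auto intro: msum_insertI[OF insert(1,2)])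
    then show "x \<in> conv (msum (insert i I) P)" using ab(3) by simp
  qed
qed

lemma conv_msum: "finite I \<Longrightarrow> conv (msum I P) = msum I (\<lambda>i. conv (P i))"
  using conv_msum_subset msum_conv_subset by blast

section \<open>A chain of varieties supported on consecutive coordinate blocks\<close>

locale chain_setting =
  fixes n l :: nat and ns :: "nat \<Rightarrow> nat" and X :: "nat \<Rightarrow> (nat \<Rightarrow> 'a::field_char_0) set"
  assumes l_pos: "l \<ge> 1"
    and ns0: "ns 0 = 0" and ns_mono: "\<forall>i<l. ns i < ns (Suc i)" and nsl: "ns l = n"
    and closed: "\<forall>i\<in>{1..l}. proj_closed n (X i)"
    and chain: "\<forall>i\<in>{1..l}. \<forall>j\<in>{1..l}. i \<noteq> j \<longrightarrow>
                  ((\<exists>p\<in>X i \<inter> X j. p \<noteq> (\<lambda>_. 0)) \<longleftrightarrow> (i = j + 1 \<or> j = i + 1))"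
    and coords: "\<forall>i\<in>{1..l}. \<forall>p\<in>X i. \<forall>j. (j < ns (i - 1) \<or> ns i < j) \<longrightarrow> p j = 0"
begin

definition block :: "nat \<Rightarrow> nat set" where
  "block k = {ns (k - 1)..ns k}"

definition block_ideal :: "nat \<Rightarrow> 'a mpoly set" where
  "block_ideal k = ideal_of n (X k) \<inter> ring_in (block k)"

definition chain_ideal :: "'a mpoly set" where
  "chain_ideal = ideal_of n (\<Union>i\<in>{1..l}. X i)"

abbreviation init_block ::
    "((nat \<Rightarrow>\<^sub>0 nat) \<Rightarrow> (nat \<Rightarrow>\<^sub>0 nat) \<Rightarrow> bool) \<Rightarrow> nat \<Rightarrow> nat \<Rightarrow> (nat \<Rightarrow>\<^sub>0 nat) set" where
  "init_block ord k m \<equiv> init_deg (block k) ord (block_ideal k) m"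

lemma ns_less: "i < j \<Longrightarrow> j \<le> l \<Longrightarrow> ns i < ns j"
proof (induction j)
  case (Suc j)
  have "ns j < ns (Suc j)" using ns_mono Suc.prems by simp
  then show ?case using Suc by (cases "i = j") auto
qed simp

lemma ns_le: "i \<le> j \<Longrightarrow> j \<le> l \<Longrightarrow> ns i \<le> ns j"
  using ns_less by (cases "i = j") (auto simp: less_imp_le)

lemma ns_less_iff: "i \<le> l \<Longrightarrow> j \<le> l \<Longrightarrow> ns i < ns j \<longleftrightarrow> i < j"
  using ns_less[of i j] ns_le[of j i] by (cases "i < j") auto

lemma ns_le_n: "i \<le> l \<Longrightarrow> ns i \<le> n"
  using ns_le[of i l] nsl by simp

lemma block_subset: "k \<in> {1..l} \<Longrightarrow> block k \<subseteq> {0..n}"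
  unfolding block_def using ns_le_n by auto

lemma point_vanishes_off_block: "i \<in> {1..l} \<Longrightarrow> p \<in> X i \<Longrightarrow> j \<notin> block i \<Longrightarrow> p j = 0"
  using coords unfolding block_def by auto

lemma block_containing:
  assumes "j \<le> n"
  obtains k where "k \<in> {1..l}" "ns (k - 1) \<le> j" "j \<le> ns k" "j = ns k \<longrightarrow> k = l"
proof (cases "j = n")
  case True
  then show ?thesis using that[of l] l_pos nsl ns_le[of "l - 1" l] by auto
next
  case False
  then have j: "j < ns l" using assms nsl by simp
  define k where "k = (LEAST k. j < ns k)"
  have jk: "j < ns k" unfolding k_def by (rule LeastI[of _ l]) (rule j)
  have kl: "k \<le> l" unfolding k_def by (rule Least_le) (rule j)
  have k1: "k \<ge> 1" using jk ns0 by (cases k) auto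
  have "\<not> j < ns (k - 1)" unfolding k_def by (rule not_less_Least) (use k1 k_def in auto)
  then show ?thesis using that[of k] jk kl k1 by auto
qed

lemma block_inter_later:
  assumes "k \<in> {1..l}" "j \<in> {1..l}" "k < j"
  shows "block k \<inter> block j \<subseteq> {ns k}"
proof -
  have "ns k \<le> ns (j - 1)" using assms by (intro ns_le) auto
  then show ?thesis unfolding block_def by auto
qed

lemma block_inter_earlier:
  assumes "k \<in> {1..l}" "j \<in> {1..l}" "j < k"
  shows "block k \<inter> block j \<subseteq> {ns (k - 1)}"
proof -
  have "ns j \<le> ns (k - 1)" using assms by (intro ns_le) auto
  then show ?thesis unfolding block_def by auto
qed

lemma shared_point:
  assumes "k \<ge> 1" "k + 1 \<le> l"
  obtains r where "r \<in> X k" "r \<in> X (k + 1)" "r \<noteq> (\<lambda>_. 0)" "\<forall>j. j \<noteq> ns k \<longrightarrow> r j = 0"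
proof -
  have "\<exists>p\<in>X k \<inter> X (k + 1). p \<noteq> (\<lambda>_. 0)" using chain[rule_format, of k "k + 1"] assms by simp
  then obtain r where r: "r \<in> X k" "r \<in> X (k + 1)" "r \<noteq> (\<lambda>_. 0)" by blast
  have "r j = 0" if "j \<noteq> ns k" for j
  proof (cases "j \<in> block k")
    case True
    then have "j \<notin> block (k + 1)" using block_inter_later[of k "k + 1"] assms that by auto
    then show ?thesis using point_vanishes_off_block[OF _ r(2)] assms by auto
  next
    case False then show ?thesis using point_vanishes_off_block[OF _ r(1)] assms by auto
  qed
  then show ?thesis using that r by blast
qed

lemma block_ideal_no_pure_power_last:
  assumes "k \<ge> 1" "k + 1 \<le> l" "h \<in> block_ideal k"
  shows "\<forall>a\<in>keys h. \<not> keys a \<subseteq> {ns k}"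
proof -
  obtain r where "r \<in> X k" "r \<noteq> (\<lambda>_. 0)" "\<forall>j. j \<noteq> ns k \<longrightarrow> r j = 0"
    using shared_point[OF assms(1,2)] by blast
  moreover have "proj_closed n (X k)" using closed assms by auto
  ultimately show ?thesis
    using assms(3) ideal_of_no_pure_power[of n "X k" h] unfolding block_ideal_def by blast
qed

lemma block_ideal_no_pure_power_first:
  assumes "k \<ge> 2" "k \<le> l" "h \<in> block_ideal k"
  shows "\<forall>a\<in>keys h. \<not> keys a \<subseteq> {ns (k - 1)}"
proof -
  have k: "k - 1 \<ge> 1" "k - 1 + 1 \<le> l" "k - 1 + 1 = k" using assms by auto
  obtain r where "r \<in> X k" "r \<noteq> (\<lambda>_. 0)" "\<forall>j. j \<noteq> ns (k - 1) \<longrightarrow> r j = 0"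
    using shared_point[OF k(1,2)] unfolding k(3) by blast
  moreover have "proj_closed n (X k)" using closed assms by auto
  ultimately show ?thesis
    using assms(3) ideal_of_no_pure_power[of n "X k" h] unfolding block_ideal_def by blast
qed

text \<open>An element of a block ideal vanishes on the other varieties because each of its monomials
  involves a variable that is not shared with the other block.\<close>

lemma block_ideal_subset: assumes k: "k \<in> {1..l}" shows "block_ideal k \<subseteq> chain_ideal"
proof
  fix h assume h: "h \<in> block_ideal k"
  have h_block: "h \<in> ring_in (block k)" "h \<in> ideal_of n (X k)"
    using h unfolding block_ideal_def by auto
  have "eval h p = 0" if j: "j \<in> {1..l}" "p \<in> X j" and p: "p \<noteq> (\<lambda>_. 0)" for p j
  proof (cases "j = k")
    case True then show ?thesis using ideal_ofD[OF h_block(2)] j p by blast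
  next
    case False
    obtain s where s: "block k \<inter> block j \<subseteq> {s}" "\<forall>a\<in>keys h. \<not> keys a \<subseteq> {s}"
    proof (cases "k < j")
      case True
      then show ?thesis
        using that[of "ns k"] block_inter_later block_ideal_no_pure_power_last[OF _ _ h] k j by auto
    next
      case False
      then have "j < k" using \<open>j \<noteq> k\<close> by simp
      then show ?thesis
        using that[of "ns (k - 1)"] block_inter_earlier
          block_ideal_no_pure_power_first[OF _ _ h] k j
        by auto
    qed
    show ?thesis
    proof (rule eval_eq_0_if_monomials_vanish, rule ballI)
      fix a assume a: "a \<in> keys h"
      then obtain i where i: "i \<in> keys a" "i \<noteq> s" using s(2) by blast
      have "i \<in> block k" using h_block(1) a i(1) unfolding ring_in_def by blast
      then have "i \<notin> block j" using s(1) i(2) by blast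
      then show "\<exists>i\<in>keys a. p i = 0" using point_vanishes_off_block[OF j] i(1) by blast
    qed
  qed
  moreover have "h \<in> ring_in {0..n}"
    using h_block(1) block_subset[OF k] unfolding ring_in_def by blast
  ultimately show "h \<in> chain_ideal" unfolding chain_ideal_def ideal_of_def by blast
qed

lemma block_part_in_block_ideal:
  assumes k: "k \<in> {1..l}" and f: "f \<in> chain_ideal"
  shows "mpoly_filter f (\<lambda>a. keys a \<subseteq> block k) \<in> block_ideal k" (is "?g \<in> _")
proof -
  have "eval ?g p = eval f p" if p: "p \<in> X k" for p
    unfolding eval_mpoly_filter unfolding eval_eq_sum_mon_val
  proof (rule sum.mono_neutral_left)
    show "\<forall>a\<in>keys f - {a \<in> keys f. keys a \<subseteq> block k}. lookup f a * mon_val a p = 0"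
    proof
      fix a assume "a \<in> keys f - {a \<in> keys f. keys a \<subseteq> block k}"
      then obtain j where "j \<in> keys a" "j \<notin> block k" by blast
      then show "lookup f a * mon_val a p = 0"
        using mon_val_eq_0[of j a p] point_vanishes_off_block[OF k p] by simp
    qed
  qed auto
  moreover have "eval f p = 0" if "p \<in> X k" "p \<noteq> (\<lambda>_. 0)" for p
    using f that k unfolding chain_ideal_def ideal_of_def by blast
  moreover have "?g \<in> ring_in (block k)" "?g \<in> ring_in {0..n}"
    using block_subset[OF k] unfolding ring_in_def by (auto simp: keys_mpoly_filter)
  ultimately show ?thesis unfolding block_ideal_def ideal_of_def by auto
qed

lemma supported_in_block_if_notin_T_deg:
  assumes b: "keys b \<subseteq> {0..n}" "keys b \<noteq> {}" "mdeg b = m" "b \<notin> T_deg n l ns m"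
  obtains k where "k \<in> {1..l}" "keys b \<subseteq> block k"
proof -
  define a where "a = Min (keys b)"
  have a: "a \<in> keys b" "\<forall>j\<in>keys b. a \<le> j" unfolding a_def using b(2) by auto
  have "a \<le> n" using a(1) b(1) by auto
  then obtain k where k: "k \<in> {1..l}" "ns (k - 1) \<le> a" "a \<le> ns k" "a = ns k \<longrightarrow> k = l"
    by (rule block_containing)
  have "j \<in> block k" if j: "j \<in> keys b" for j
  proof (rule ccontr)
    assume "j \<notin> block k"
    then have jk: "ns k < j" using a(2) j k(2) unfolding block_def by fastforce
    have jn: "j \<le> n" using j b(1) by auto
    then have "ns k < ns l" using jk nsl by simp
    then have "k < l" using ns_less_iff k(1) by auto
    then have "k \<in> {1..l - 1}" "a \<in> {ns (k - 1)..<ns k}" "j \<in> {ns k + 1..n}"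
      using k jk jn by auto
    moreover have "lookup b a \<ge> 1" "lookup b j \<ge> 1" using a(1) j by (auto simp: in_keys_iff)
    ultimately have "b \<in> T_deg n l ns m" unfolding T_deg_def using b(1,3) by blast
    then show False using b(4) by blast
  qed
  then show ?thesis using that k(1) by blast
qed

lemma block_monomial_notin_T_deg:
  assumes k: "k \<in> {1..l}" and b: "keys b \<subseteq> block k"
  shows "b \<notin> T_deg n l ns m"
proof
  assume "b \<in> T_deg n l ns m"
  then obtain i j j' where ij: "i \<in> {1..l - 1}" "j \<in> {ns (i - 1)..<ns i}" "j' \<in> {ns i + 1..n}"
    "lookup b j \<ge> 1" "lookup b j' \<ge> 1" unfolding T_deg_def by blast
  then have "j \<in> block k" "j' \<in> block k" using b by (auto simp: in_keys_iff)
  then have "ns (k - 1) < ns i" "ns i < ns k" using ij unfolding block_def by auto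
  then show False using ns_less_iff k ij(1) by auto
qed

text \<open>The generator x_j x_j' of T_i vanishes on every X_{i'}: if i' \<le> i then x_j' is right of
  block i', otherwise x_j is left of it.\<close>

lemma T_generator_in_chain_ideal:
  assumes ij: "i \<in> {1..l - 1}" "j \<in> {ns (i - 1)..<ns i}" "j' \<in> {ns i + 1..n}"
  shows "Poly_Mapping.single (Poly_Mapping.single j 1 + Poly_Mapping.single j' 1) (1::'a)
    \<in> chain_ideal" (is "Poly_Mapping.single ?\<gamma> 1 \<in> _")
proof -
  have keys_\<gamma>: "keys ?\<gamma> = {j, j'}"
    using ij by (auto simp: in_keys_iff lookup_add lookup_single when_def split: if_splits)
  have "j \<le> n" "j' \<le> n" using ij ns_le_n[of i] by auto
  then have "Poly_Mapping.single ?\<gamma> (1::'a) \<in> ring_in {0..n}"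
    using keys_\<gamma> unfolding ring_in_def by simp
  moreover have "eval (Poly_Mapping.single ?\<gamma> (1::'a)) p = 0" if "p \<in> X i'" "i' \<in> {1..l}" for p i'
  proof -
    have "\<exists>x\<in>{j, j'}. p x = 0"
    proof (cases "i' \<le> i")
      case True
      then have "ns i' \<le> ns i" using ns_le ij(1) by auto
      then have "j' \<notin> block i'" using ij(3) unfolding block_def by auto
      then show ?thesis using point_vanishes_off_block that by blast
    next
      case False
      then have "ns i \<le> ns (i' - 1)" using ns_le that(2) by auto
      then have "j \<notin> block i'" using ij(2) unfolding block_def by auto
      then show ?thesis using point_vanishes_off_block that by blast
    qed
    then show ?thesis using keys_\<gamma> by (intro eval_eq_0_if_monomials_vanish) simp
  qed
  ultimately show ?thesis unfolding chain_ideal_def ideal_of_def by blast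
qed

lemma T_deg_subset_init_deg:
  assumes mo: "mono_order {0..n} ord"
  shows "T_deg n l ns m \<subseteq> init_deg {0..n} ord chain_ideal m"
proof
  fix b assume b: "b \<in> T_deg n l ns m"
  then obtain i j j' where ij: "i \<in> {1..l - 1}" "j \<in> {ns (i - 1)..<ns i}" "j' \<in> {ns i + 1..n}"
    "lookup b j \<ge> 1" "lookup b j' \<ge> 1" unfolding T_deg_def by blast
  define \<gamma> where "\<gamma> = Poly_Mapping.single j (1::nat) + Poly_Mapping.single j' 1"
  define f where "f = Poly_Mapping.single \<gamma> (1::'a)"
  have "j \<le> n" "j' \<le> n" using ij ns_le_n[of i] by auto
  then have "keys \<gamma> \<subseteq> {0..n}"
    by (auto simp: \<gamma>_def in_keys_iff lookup_add lookup_single when_def split: if_splits)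
  then have "lm ord f = \<gamma>"
    unfolding f_def by (intro lm_eqI[OF mo]) (auto intro: mono_order_refl[OF mo])
  moreover have "f \<in> chain_ideal"
    unfolding f_def \<gamma>_def using T_generator_in_chain_ideal[OF ij(1-3)] .
  moreover have "f \<noteq> 0" unfolding f_def by (metis lookup_single_eq lookup_zero zero_neq_one)
  moreover have "mdvd \<gamma> b"
    unfolding mdvd_def \<gamma>_def using ij by (auto simp: lookup_add lookup_single when_def)
  ultimately show "b \<in> init_deg {0..n} ord chain_ideal m"
    using b unfolding init_deg_def T_deg_def by blast
qed

lemma init_block_subset_init_deg:
  "k \<in> {1..l} \<Longrightarrow> init_block ord k m \<subseteq> init_deg {0..n} ord chain_ideal m"
  unfolding init_deg_def using block_ideal_subset block_subset by blast

lemma init_deg_subset_T_deg_init_blocks: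
  assumes mo: "mono_order {0..n} ord" and m: "m > 0"
  shows "init_deg {0..n} ord chain_ideal m \<subseteq> T_deg n l ns m \<union> (\<Union>k\<in>{1..l}. init_block ord k m)"
proof
  fix b assume "b \<in> init_deg {0..n} ord chain_ideal m"
  then obtain f where f: "f \<in> chain_ideal" "f \<noteq> 0" "mdvd (lm ord f) b"
    and b: "keys b \<subseteq> {0..n}" "mdeg b = m"
    unfolding init_deg_def by blast
  show "b \<in> T_deg n l ns m \<union> (\<Union>k\<in>{1..l}. init_block ord k m)"
  proof (cases "b \<in> T_deg n l ns m")
    case False
    have "keys b \<noteq> {}" using b(2) m by (auto simp: mdeg_def)
    then obtain k where k: "k \<in> {1..l}" "keys b \<subseteq> block k"
      using supported_in_block_if_notin_T_deg b False by metis
    have f_keys: "\<forall>a\<in>keys f. keys a \<subseteq> {0..n}"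
      using f(1) unfolding chain_ideal_def ideal_of_def ring_in_def by blast
    have lm_block: "keys (lm ord f) \<subseteq> block k" using mdvd_keys_subset[OF f(3)] k(2) by blast
    define g where "g = mpoly_filter f (\<lambda>a. keys a \<subseteq> block k)"
    have keys_g: "keys g = {a \<in> keys f. keys a \<subseteq> block k}" unfolding g_def keys_mpoly_filter ..
    have lm_g: "lm ord f \<in> keys g" using keys_g lm_greatest(1)[OF mo f(2) f_keys] lm_block by blast
    then have "g \<noteq> 0" by auto
    moreover have "lm ord g = lm ord f"
      by (rule lm_eqI[OF mo]) (use keys_g f_keys lm_g lm_greatest(2)[OF mo f(2) f_keys] in auto)
    moreover have "g \<in> block_ideal k"
      unfolding g_def by (rule block_part_in_block_ideal[OF k(1) f(1)])
    ultimately have "b \<in> init_block ord k m" unfolding init_deg_def using f(3) b k(2) by auto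
    then show ?thesis using k(1) by blast
  qed blast
qed

lemma init_deg_chain_ideal:
  "mono_order {0..n} ord \<Longrightarrow> m > 0 \<Longrightarrow>
    init_deg {0..n} ord chain_ideal m = T_deg n l ns m \<union> (\<Union>k\<in>{1..l}. init_block ord k m)"
  using init_deg_subset_T_deg_init_blocks T_deg_subset_init_deg init_block_subset_init_deg
  by (intro equalityI) blast+

lemma T_deg_disjoint_init_block: "k \<in> {1..l} \<Longrightarrow> T_deg n l ns m \<inter> init_block ord k m = {}"
  using block_monomial_notin_T_deg unfolding init_deg_def by blast

text \<open>A common monomial of two blocks would be a pure power of the shared variable x_{n_k},
  and so would be the leading monomial dividing it.\<close>

lemma init_blocks_disjoint_less:
  assumes k: "k \<in> {1..l}" "k' \<in> {1..l}" "k < k'" and mo: "mono_order (block k) ord"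
  shows "init_block ord k m \<inter> init_block ord' k' m = {}"
proof (rule ccontr)
  assume "init_block ord k m \<inter> init_block ord' k' m \<noteq> {}"
  then obtain b where b: "b \<in> init_block ord k m" "b \<in> init_block ord' k' m" by blast
  then have "keys b \<subseteq> block k \<inter> block k'" unfolding init_deg_def by auto
  then have b_pure: "keys b \<subseteq> {ns k}" using block_inter_later[OF k] by blast
  obtain g where g: "g \<in> block_ideal k" "g \<noteq> 0" "mdvd (lm ord g) b"
    using b(1) unfolding init_deg_def by blast
  have "\<forall>a\<in>keys g. keys a \<subseteq> block k" using g(1) unfolding block_ideal_def ring_in_def by blast
  then have "lm ord g \<in> keys g" using lm_greatest(1)[OF mo g(2)] by blast
  moreover have "keys (lm ord g) \<subseteq> {ns k}" using mdvd_keys_subset[OF g(3)] b_pure by blast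
  moreover have "\<forall>a\<in>keys g. \<not> keys a \<subseteq> {ns k}"
    by (rule block_ideal_no_pure_power_last) (use k g(1) in auto)
  ultimately show False by blast
qed

lemma init_blocks_disjoint:
  assumes "k \<in> {1..l}" "k' \<in> {1..l}" "k \<noteq> k'"
    and "mono_order (block k) ord" "mono_order (block k') ord'"
  shows "init_block ord k m \<inter> init_block ord' k' m = {}"
  using assms init_blocks_disjoint_less[of k k' ord m ord']
    init_blocks_disjoint_less[of k' k ord' m ord]
  by (cases "k < k'") auto

lemma vecsum_init_deg_chain_ideal:
  assumes mo: "mono_order {0..n} ord" and m: "m > 0"
  shows "vecsum (init_deg {0..n} ord chain_ideal m) =
           (\<lambda>j. vecsum (T_deg n l ns m) j + (\<Sum>k\<in>{1..l}. vecsum (init_block ord k m) j))"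
proof
  fix j
  have fin: "\<forall>k\<in>{1..l}. finite (init_block ord k m)" using finite_init_deg block_subset by blast
  have "\<forall>k\<in>{1..l}. mono_order (block k) ord" using mono_order_subset[OF mo] block_subset by blast
  then have disj: "\<forall>k\<in>{1..l}. \<forall>k'\<in>{1..l}. k \<noteq> k' \<longrightarrow> init_block ord k m \<inter> init_block ord k' m = {}"
    using init_blocks_disjoint by blast
  have "(\<Sum>a\<in>init_deg {0..n} ord chain_ideal m. lookup a j)
      = (\<Sum>a\<in>T_deg n l ns m. lookup a j) + (\<Sum>a\<in>(\<Union>k\<in>{1..l}. init_block ord k m). lookup a j)"
    unfolding init_deg_chain_ideal[OF mo m] using fin T_deg_disjoint_init_block
    by (intro sum.union_disjoint finite_T_deg) blast+
  also have "(\<Sum>a\<in>(\<Union>k\<in>{1..l}. init_block ord k m). lookup a j)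
      = (\<Sum>k\<in>{1..l}. \<Sum>a\<in>init_block ord k m. lookup a j)"
    by (rule sum.UNION_disjoint) (use fin disj in auto)
  finally show "vecsum (init_deg {0..n} ord chain_ideal m) j =
      vecsum (T_deg n l ns m) j + (\<Sum>k\<in>{1..l}. vecsum (init_block ord k m) j)"
    unfolding vecsum_def by simp
qed

subsection \<open>Gluing monomial orders on the blocks\<close>

definition block_proj :: "nat \<Rightarrow> (nat \<Rightarrow>\<^sub>0 nat) \<Rightarrow> (nat \<Rightarrow>\<^sub>0 nat)" where
  "block_proj k a = Abs_poly_mapping (\<lambda>j.
     if j = ns (k - 1) then \<Sum>i\<in>{0..ns (k - 1)}. lookup a i
     else if ns (k - 1) < j \<and> j < ns k then lookup a j
     else if j = ns k then \<Sum>i\<in>{ns k..n}. lookup a i else 0)"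

lemma lookup_block_proj:
  "lookup (block_proj k a) j =
     (if j = ns (k - 1) then \<Sum>i\<in>{0..ns (k - 1)}. lookup a i
      else if ns (k - 1) < j \<and> j < ns k then lookup a j
      else if j = ns k then \<Sum>i\<in>{ns k..n}. lookup a i else 0)"
proof -
  have "finite {j. (if j = ns (k - 1) then \<Sum>i\<in>{0..ns (k - 1)}. lookup a i
      else if ns (k - 1) < j \<and> j < ns k then lookup a j
      else if j = ns k then \<Sum>i\<in>{ns k..n}. lookup a i else 0) \<noteq> 0}"
    by (rule finite_subset[of _ "{..ns k} \<union> {ns (k - 1)}"]) (auto split: if_splits)
  then show ?thesis unfolding block_proj_def by simp
qed

lemma keys_block_proj: "k \<in> {1..l} \<Longrightarrow> keys (block_proj k a) \<subseteq> block k"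
proof
  fix j assume k: "k \<in> {1..l}" and j: "j \<in> keys (block_proj k a)"
  have "ns (k - 1) \<le> ns k" using ns_le k by auto
  then show "j \<in> block k"
    using j unfolding block_def by (auto simp: in_keys_iff lookup_block_proj split: if_splits)
qed

lemma block_proj_add: "block_proj k (a + b) = block_proj k a + block_proj k b"
  by (rule poly_mapping_eqI) (simp add: lookup_add lookup_block_proj sum.distrib)

lemma block_proj_id:
  assumes k: "k \<in> {1..l}" and a: "keys a \<subseteq> block k"
  shows "block_proj k a = a"
proof (rule poly_mapping_eqI)
  fix j
  have z: "lookup a i = 0" if "i \<notin> block k" for i using a that by (auto simp: in_keys_iff)
  have nk: "ns (k - 1) < ns k" "ns k \<le> n" using ns_less[of "k - 1" k] ns_le_n k by auto
  show "lookup (block_proj k a) j = lookup a j"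
  proof -
    have c1: "(\<Sum>i\<in>{0..ns (k - 1)}. lookup a i) = lookup a (ns (k - 1))"
      by (subst sum.remove[of _ "ns (k - 1)"])
        (use z in \<open>auto simp: block_def intro!: sum.neutral\<close>)
    have c2: "(\<Sum>i\<in>{ns k..n}. lookup a i) = lookup a (ns k)"
      by (subst sum.remove[of _ "ns k"])
        (use z nk in \<open>auto simp: block_def intro!: sum.neutral\<close>)
    show ?thesis unfolding lookup_block_proj using c1 c2 z nk by (auto simp: block_def)
  qed
qed

lemma block_proj_other:
  assumes k: "k \<in> {1..l}" and i: "i \<in> {1..l}" "i \<noteq> k"
    and a: "keys a \<subseteq> block k" and b: "keys b \<subseteq> block k" and d: "mdeg a = mdeg b"
  shows "block_proj i a = block_proj i b"
proof (cases "i < k")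
  case True
  have i_start: "ns (i - 1) < ns (k - 1)" using ns_less[of "i - 1" "k - 1"] True i k by auto
  have i_before: "ns i \<le> ns (k - 1)" using ns_le[of i "k - 1"] True k by auto
  have left: "(\<Sum>x\<in>{0..ns (i - Suc 0)}. lookup c x) = 0"
    if "keys c \<subseteq> block k" for c :: "nat \<Rightarrow>\<^sub>0 nat"
    by (rule sum_lookup_eq_0) (use that i_start in \<open>auto simp: block_def\<close>)
  have right: "(\<Sum>x\<in>{ns i..n}. lookup c x) = mdeg c"
    if "keys c \<subseteq> block k" for c :: "nat \<Rightarrow>\<^sub>0 nat"
  proof -
    have "block k \<subseteq> {ns i..n}" using i_before ns_le_n[of k] k by (auto simp: block_def)
    then show ?thesis by (intro sum_lookup_eq_mdeg) (use that in auto)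
  qed
  have inside: "lookup c j = 0"
    if "keys c \<subseteq> block k" "j < ns i" for c :: "nat \<Rightarrow>\<^sub>0 nat" and j
    using that i_before by (auto simp: in_keys_iff block_def)
  show ?thesis
    by (rule poly_mapping_eqI)
      (simp add: lookup_block_proj d left[OF a] left[OF b] right[OF a] right[OF b]
        inside[OF a] inside[OF b])
next
  case False
  then have ik: "k < i" using i(2) by simp
  have i_after: "ns k \<le> ns (i - 1)" using ns_le[of k "i - 1"] ik i by auto
  have i_end: "ns k < ns i" using ns_less[of k i] ik i by auto
  have left: "(\<Sum>x\<in>{0..ns (i - Suc 0)}. lookup c x) = mdeg c"
    if "keys c \<subseteq> block k" for c :: "nat \<Rightarrow>\<^sub>0 nat"
  proof -
    have "block k \<subseteq> {0..ns (i - 1)}" using i_after by (auto simp: block_def)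
    then show ?thesis by (intro sum_lookup_eq_mdeg) (use that in auto)
  qed
  have right: "(\<Sum>x\<in>{ns i..n}. lookup c x) = 0"
    if "keys c \<subseteq> block k" for c :: "nat \<Rightarrow>\<^sub>0 nat"
    by (rule sum_lookup_eq_0) (use that i_end in \<open>auto simp: block_def\<close>)
  have inside: "lookup c j = 0"
    if "keys c \<subseteq> block k" "ns (i - Suc 0) < j" for c :: "nat \<Rightarrow>\<^sub>0 nat" and j
    using that i_after by (auto simp: in_keys_iff block_def)
  show ?thesis
    by (rule poly_mapping_eqI)
      (simp add: lookup_block_proj d left[OF a] left[OF b] right[OF a] right[OF b]
        inside[OF a] inside[OF b])
qed

definition same_blocks :: "(nat \<Rightarrow>\<^sub>0 nat) \<Rightarrow> (nat \<Rightarrow>\<^sub>0 nat) \<Rightarrow> bool" where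
  "same_blocks a b \<longleftrightarrow> (\<forall>k\<in>{1..l}. block_proj k a = block_proj k b)"

definition first_diff :: "nat \<Rightarrow> (nat \<Rightarrow>\<^sub>0 nat) \<Rightarrow> (nat \<Rightarrow>\<^sub>0 nat) \<Rightarrow> bool" where
  "first_diff k a b \<longleftrightarrow> k \<in> {1..l} \<and> (\<forall>i\<in>{1..<k}. block_proj i a = block_proj i b) \<and>
     block_proj k a \<noteq> block_proj k b"

definition block_lex ::
    "(nat \<Rightarrow> (nat \<Rightarrow>\<^sub>0 nat) \<Rightarrow> (nat \<Rightarrow>\<^sub>0 nat) \<Rightarrow> bool) \<Rightarrow> (nat \<Rightarrow>\<^sub>0 nat) \<Rightarrow> (nat \<Rightarrow>\<^sub>0 nat) \<Rightarrow> bool"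
  where "block_lex ords a b \<longleftrightarrow> (\<exists>k. first_diff k a b \<and> ords k (block_proj k a) (block_proj k b))"

text \<open>Ties
  between distinct monomials with equal block projections are broken by the lexicographic order
  of Poly_Mapping, which is compatible with addition.\<close>

definition glued_order ::
    "(nat \<Rightarrow> (nat \<Rightarrow>\<^sub>0 nat) \<Rightarrow> (nat \<Rightarrow>\<^sub>0 nat) \<Rightarrow> bool) \<Rightarrow> (nat \<Rightarrow>\<^sub>0 nat) \<Rightarrow> (nat \<Rightarrow>\<^sub>0 nat) \<Rightarrow> bool"
  where "glued_order ords a b \<longleftrightarrow> mdeg a < mdeg b \<or>
    (mdeg a = mdeg b \<and> (block_lex ords a b \<or> (same_blocks a b \<and> a \<le> b)))"

lemma same_blocks_sym: "same_blocks a b \<longleftrightarrow> same_blocks b a"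
  unfolding same_blocks_def by metis

lemma same_blocks_trans: "same_blocks a b \<Longrightarrow> same_blocks b c \<Longrightarrow> same_blocks a c"
  unfolding same_blocks_def by auto

lemma first_diff_sym: "first_diff k a b \<longleftrightarrow> first_diff k b a"
  unfolding first_diff_def by metis

lemma first_diff_unique:
  assumes "first_diff k a b" "first_diff k' a b"
  shows "k = k'"
proof (rule ccontr)
  assume "k \<noteq> k'"
  then have "k < k' \<or> k' < k" by arith
  then show False using assms unfolding first_diff_def by auto
qed

lemma not_same_blocks_iff: "\<not> same_blocks a b \<longleftrightarrow> (\<exists>k. first_diff k a b)"
proof
  assume "\<not> same_blocks a b"
  then have ex: "\<exists>k. k \<in> {1..l} \<and> block_proj k a \<noteq> block_proj k b"
    unfolding same_blocks_def by blast
  define k where "k = (LEAST k. k \<in> {1..l} \<and> block_proj k a \<noteq> block_proj k b)"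
  have "k \<in> {1..l}" "block_proj k a \<noteq> block_proj k b"
    using LeastI_ex[OF ex] unfolding k_def by auto
  moreover have "\<not> (i \<in> {1..l} \<and> block_proj i a \<noteq> block_proj i b)" if "i < k" for i
    using that unfolding k_def by (rule not_less_Least)
  ultimately have "\<forall>i\<in>{1..<k}. block_proj i a = block_proj i b" by auto
  with \<open>k \<in> {1..l}\<close> \<open>block_proj k a \<noteq> block_proj k b\<close> show "\<exists>k. first_diff k a b"
    unfolding first_diff_def by blast
qed (auto simp: first_diff_def same_blocks_def)

lemma first_diff_same_blocks_left: "same_blocks a b \<Longrightarrow> first_diff k a c \<longleftrightarrow> first_diff k b c"
  unfolding same_blocks_def first_diff_def by auto

lemma block_lex_same_blocks_left:
  assumes "same_blocks a b"
  shows "block_lex ords a c \<longleftrightarrow> block_lex ords b c"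
proof -
  have "block_proj k a = block_proj k b" if "first_diff k a c" for k
    using assms that unfolding same_blocks_def first_diff_def by auto
  then show ?thesis unfolding block_lex_def using first_diff_same_blocks_left[OF assms] by auto
qed

lemma block_lex_same_blocks_right:
  assumes "same_blocks b c"
  shows "block_lex ords a b \<longleftrightarrow> block_lex ords a c"
proof -
  have "block_proj k b = block_proj k c" if "first_diff k a b" for k
    using assms that unfolding same_blocks_def first_diff_def by auto
  moreover have "first_diff k a b \<longleftrightarrow> first_diff k a c" for k
    using first_diff_same_blocks_left[OF assms] first_diff_sym by blast
  ultimately show ?thesis unfolding block_lex_def by auto
qed

lemma block_lex_not_same_blocks: "block_lex ords a b \<Longrightarrow> \<not> same_blocks a b"
  unfolding block_lex_def using not_same_blocks_iff by blast

context
  fixes ords :: "nat \<Rightarrow> (nat \<Rightarrow>\<^sub>0 nat) \<Rightarrow> (nat \<Rightarrow>\<^sub>0 nat) \<Rightarrow> bool"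
  assumes ords: "\<forall>k\<in>{1..l}. mono_order (block k) (ords k)"
begin

lemma block_lex_total:
  assumes "\<not> same_blocks a b"
  shows "block_lex ords a b \<or> block_lex ords b a"
proof -
  obtain k where k: "first_diff k a b" using assms not_same_blocks_iff by blast
  then have k_block: "k \<in> {1..l}" unfolding first_diff_def by blast
  have "ords k (block_proj k a) (block_proj k b) \<or> ords k (block_proj k b) (block_proj k a)"
    by (rule mono_order_total[OF ords[rule_format, OF k_block]])
      (use keys_block_proj[OF k_block] in auto)
  then show ?thesis unfolding block_lex_def using k first_diff_sym by blast
qed

lemma block_lex_antisym:
  assumes ab: "block_lex ords a b"
  shows "\<not> block_lex ords b a"
proof
  assume ba: "block_lex ords b a"
  obtain k where k: "first_diff k a b" "ords k (block_proj k a) (block_proj k b)"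
    using ab unfolding block_lex_def by blast
  obtain k' where k': "first_diff k' b a" "ords k' (block_proj k' b) (block_proj k' a)"
    using ba unfolding block_lex_def by blast
  have "k' = k" using first_diff_unique k(1) k'(1) first_diff_sym by blast
  moreover have k_block: "k \<in> {1..l}" using k(1) unfolding first_diff_def by blast
  ultimately have "block_proj k a = block_proj k b"
    using mono_order_antisym[OF ords[rule_format, OF k_block] _ _ k(2)] k'(2) keys_block_proj
    by blast
  then show False using k(1) unfolding first_diff_def by blast
qed

lemma block_lex_trans:
  assumes ab: "block_lex ords a b" and bc: "block_lex ords b c"
  shows "block_lex ords a c"
proof -
  obtain k where k: "first_diff k a b" "ords k (block_proj k a) (block_proj k b)"
    using ab unfolding block_lex_def by blast
  obtain k' where k': "first_diff k' b c" "ords k' (block_proj k' b) (block_proj k' c)"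
    using bc unfolding block_lex_def by blast
  consider "k < k'" | "k' < k" | "k = k'" by linarith
  then show ?thesis
  proof cases
    case 1
    then have "first_diff k a c" using k(1) k'(1) unfolding first_diff_def by auto
    then show ?thesis unfolding block_lex_def using k' 1 k(2) unfolding first_diff_def by auto
  next
    case 2
    then have "first_diff k' a c" using k(1) k'(1) unfolding first_diff_def by auto
    then show ?thesis unfolding block_lex_def using k 2 k'(2) unfolding first_diff_def by auto
  next
    case 3
    have k_block: "k \<in> {1..l}" using k(1) unfolding first_diff_def by blast
    note mo = ords[rule_format, OF k_block]
    have keys: "keys (block_proj k x) \<subseteq> block k" for x using keys_block_proj[OF k_block] .
    have ac: "ords k (block_proj k a) (block_proj k c)"
      using mono_order_trans[OF mo keys keys keys k(2)] k'(2) 3 by blast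
    have "block_proj k a \<noteq> block_proj k c"
      using mono_order_antisym[OF mo keys keys k(2)] k'(2) k(1) 3 unfolding first_diff_def by auto
    then have "first_diff k a c" using k(1) k'(1) 3 unfolding first_diff_def by auto
    then show ?thesis unfolding block_lex_def using ac by blast
  qed
qed

lemma block_lex_add:
  assumes "block_lex ords a b"
  shows "block_lex ords (a + c) (b + c)"
proof -
  obtain k where k: "first_diff k a b" "ords k (block_proj k a) (block_proj k b)"
    using assms unfolding block_lex_def by blast
  then have k_block: "k \<in> {1..l}" unfolding first_diff_def by blast
  have "first_diff k (a + c) (b + c)" using k(1) unfolding first_diff_def block_proj_add by auto
  moreover have "ords k (block_proj k a + block_proj k c) (block_proj k b + block_proj k c)"
    using mono_order_add[OF ords[rule_format, OF k_block] _ _ _ k(2)] keys_block_proj[OF k_block]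
    by blast
  ultimately show ?thesis unfolding block_lex_def block_proj_add by blast
qed

lemma glued_order_refl: "glued_order ords a a"
  unfolding glued_order_def same_blocks_def by simp

lemma glued_order_total: "glued_order ords a b \<or> glued_order ords b a"
proof (cases "mdeg a = mdeg b")
  case True
  consider "same_blocks a b" | "block_lex ords a b" | "block_lex ords b a"
    using block_lex_total by blast
  then show ?thesis
    using True same_blocks_sym[of a b] linear[of a b] unfolding glued_order_def by cases auto
qed (auto simp: glued_order_def)

lemma glued_order_antisym:
  assumes ab: "glued_order ords a b" and ba: "glued_order ords b a"
  shows "a = b"
proof -
  have "mdeg a = mdeg b" using ab ba unfolding glued_order_def by auto
  then have ab': "block_lex ords a b \<or> (same_blocks a b \<and> a \<le> b)"
    and ba': "block_lex ords b a \<or> (same_blocks b a \<and> b \<le> a)"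
    using ab ba unfolding glued_order_def by auto
  have "\<not> block_lex ords a b"
    using ba' block_lex_antisym block_lex_not_same_blocks same_blocks_sym by blast
  moreover have "\<not> block_lex ords b a"
    using ab' block_lex_antisym block_lex_not_same_blocks same_blocks_sym by blast
  ultimately show ?thesis using ab' ba' by (simp add: antisym)
qed

lemma glued_order_trans:
  assumes ab: "glued_order ords a b" and bc: "glued_order ords b c"
  shows "glued_order ords a c"
proof (cases "mdeg a = mdeg b \<and> mdeg b = mdeg c")
  case True
  have ab': "block_lex ords a b \<or> (same_blocks a b \<and> a \<le> b)"
    and bc': "block_lex ords b c \<or> (same_blocks b c \<and> b \<le> c)"
    using ab bc True unfolding glued_order_def by auto
  have "block_lex ords a c \<or> (same_blocks a c \<and> a \<le> c)"
  proof (cases "block_lex ords a b")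
    case True
    then show ?thesis using bc' block_lex_trans block_lex_same_blocks_right by blast
  next
    case False
    then have "same_blocks a b" "a \<le> b" using ab' by auto
    then show ?thesis using bc' block_lex_same_blocks_left same_blocks_trans order_trans by blast
  qed
  then show ?thesis using True unfolding glued_order_def by auto
qed (use ab bc in \<open>auto simp: glued_order_def\<close>)

lemma glued_order_add:
  assumes "glued_order ords a b"
  shows "glued_order ords (a + c) (b + c)"
proof -
  have "same_blocks (a + c) (b + c)" if "same_blocks a b"
    using that unfolding same_blocks_def block_proj_add by simp
  then show ?thesis
    using assms block_lex_add add_right_mono[of a b c] unfolding glued_order_def mdeg_add by auto
qed

text \<open>Among the monomials of least degree in A, of which there are finitely many, the glued order
  has a least element, and it is below everything of larger degree.\<close>

lemma glued_order_wf:
  assumes A: "A \<subseteq> {a. keys a \<subseteq> {0..n}}" "A \<noteq> {}"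
  shows "\<exists>a\<in>A. \<forall>b\<in>A. glued_order ords a b"
proof -
  define d where "d = (LEAST d. \<exists>a\<in>A. mdeg a = d)"
  have ex: "\<exists>a\<in>A. mdeg a = d" unfolding d_def by (rule LeastI_ex) (use A(2) in blast)
  have d_le: "d \<le> mdeg b" if "b \<in> A" for b unfolding d_def by (rule Least_le) (use that in blast)
  define A_d where "A_d = {a\<in>A. mdeg a = d}"
  have "finite A_d"
    by (rule finite_subset[OF _ finite_monomials_deg[of n d]]) (use A(1) in \<open>auto simp: A_d_def\<close>)
  moreover have "A_d \<noteq> {}" using ex unfolding A_d_def by blast
  ultimately obtain a where a: "a \<in> A_d" "\<forall>b\<in>A_d. glued_order ords a b"
    using finite_total_has_least[of A_d "glued_order ords"] glued_order_total glued_order_trans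
    by blast
  have "glued_order ords a b" if "b \<in> A" for b
  proof (cases "mdeg b = d")
    case False
    then have "mdeg a < mdeg b" using d_le[OF that] a(1) unfolding A_d_def by auto
    then show ?thesis unfolding glued_order_def by simp
  qed (use a that in \<open>auto simp: A_d_def\<close>)
  then show ?thesis using a(1) unfolding A_d_def by blast
qed

lemma mono_order_glued_order: "mono_order {0..n} (glued_order ords)"
  unfolding mono_order_iff
proof (intro conjI allI impI)
  fix A :: "(nat \<Rightarrow>\<^sub>0 nat) set"
  assume "A \<subseteq> {a. keys a \<subseteq> {0..n}}" "A \<noteq> {}"
  then show "\<exists>a\<in>A. \<forall>b\<in>A. glued_order ords a b" by (rule glued_order_wf)
qed (use glued_order_refl glued_order_antisym glued_order_trans glued_order_total glued_order_add
  in \<open>blast+\<close>)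

lemma glued_order_agrees:
  assumes k: "k \<in> {1..l}" and a: "keys a \<subseteq> block k" and b: "keys b \<subseteq> block k"
    and d: "mdeg a = mdeg b"
  shows "glued_order ords a b \<longleftrightarrow> ords k a b"
proof (cases "a = b")
  case True
  then show ?thesis using glued_order_refl mono_order_refl[OF ords[rule_format, OF k] a] by simp
next
  case False
  have proj: "block_proj k a = a" "block_proj k b = b" using block_proj_id k a b by auto
  have "\<forall>i\<in>{1..<k}. block_proj i a = block_proj i b"
    using block_proj_other[OF k _ _ a b d] k by auto
  then have first: "first_diff k a b" unfolding first_diff_def using k proj False by auto
  then have "\<not> same_blocks a b" using not_same_blocks_iff by blast
  then have "glued_order ords a b \<longleftrightarrow> block_lex ords a b" unfolding glued_order_def using d by simp
  also have "\<dots> \<longleftrightarrow> ords k a b"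
  proof
    assume "block_lex ords a b"
    then obtain k' where k': "first_diff k' a b" "ords k' (block_proj k' a) (block_proj k' b)"
      unfolding block_lex_def by blast
    then have "k' = k" using first_diff_unique[OF first] by simp
    then show "ords k a b" using k'(2) proj by simp
  next
    assume "ords k a b"
    then show "block_lex ords a b"
      unfolding block_lex_def using first proj by (intro exI[of _ k]) simp
  qed
  finally show ?thesis .
qed

end


lemma init_block_glued_order:
  assumes ords: "\<forall>k\<in>{1..l}. mono_order (block k) (ords k)" and k: "k \<in> {1..l}"
  shows "init_block (glued_order ords) k m = init_block (ords k) k m"
  unfolding block_ideal_def
proof (rule init_deg_ideal_of_cong)
  show "proj_closed n (X k)" using closed k by blast
  show "mono_order (block k) (glued_order ords)"
    using mono_order_subset[OF mono_order_glued_order[OF ords] block_subset[OF k]] .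
  show "mono_order (block k) (ords k)" using ords k by blast
qed (rule glued_order_agrees[OF ords k])

lemma state_vertices_chain_ideal:
  assumes m: "m > 0"
  shows "{vecsum (init_deg {0..n} ord chain_ideal m) | ord. mono_order {0..n} ord} =
    (\<lambda>x j. vecsum (T_deg n l ns m) j + x j) `
      msum {1..l} (\<lambda>k. {vecsum (init_block ord k m) | ord. mono_order (block k) ord})"
    (is "?S = ?tr ` msum {1..l} ?V")
proof
  show "?S \<subseteq> ?tr ` msum {1..l} ?V"
  proof
    fix x assume "x \<in> ?S"
    then obtain ord where ord: "mono_order {0..n} ord"
      "x = vecsum (init_deg {0..n} ord chain_ideal m)"
      by blast
    have "\<forall>k\<in>{1..l}. vecsum (init_block ord k m) \<in> ?V k"
      using mono_order_subset[OF ord(1) block_subset] by blast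
    then have "(\<lambda>j. \<Sum>k\<in>{1..l}. vecsum (init_block ord k m) j) \<in> msum {1..l} ?V"
      unfolding msum_def by (intro CollectI exI[where x="\<lambda>k. vecsum (init_block ord k m)"]) simp
    moreover have "x = ?tr (\<lambda>j. \<Sum>k\<in>{1..l}. vecsum (init_block ord k m) j)"
      unfolding ord(2) vecsum_init_deg_chain_ideal[OF ord(1) m] by simp
    ultimately show "x \<in> ?tr ` msum {1..l} ?V"
      by (intro image_eqI[where x="\<lambda>j. \<Sum>k\<in>{1..l}. vecsum (init_block ord k m) j"]) simp_all
  qed
next
  show "?tr ` msum {1..l} ?V \<subseteq> ?S"
  proof
    fix x assume "x \<in> ?tr ` msum {1..l} ?V"
    then obtain y where y: "\<forall>k\<in>{1..l}. y k \<in> ?V k" "x = ?tr (\<lambda>j. \<Sum>k\<in>{1..l}. y k j)"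
      unfolding msum_def by blast
    have "\<forall>k\<in>{1..l}. \<exists>ord. mono_order (block k) ord \<and> y k = vecsum (init_block ord k m)"
      using y(1) by blast
    then obtain ords where ords: "\<forall>k\<in>{1..l}. mono_order (block k) (ords k)"
      and y_ords: "\<forall>k\<in>{1..l}. y k = vecsum (init_block (ords k) k m)"
      by (metis (no_types))
    have glued: "mono_order {0..n} (glued_order ords)" by (rule mono_order_glued_order[OF ords])
    have "x = vecsum (init_deg {0..n} (glued_order ords) chain_ideal m)"
      unfolding y(2) vecsum_init_deg_chain_ideal[OF glued m]
      using init_block_glued_order[OF ords] y_ords by simp
    then show "x \<in> ?S" using glued by blast
  qed
qed

lemma state_polytope_chain_ideal:
  "m > 0 \<Longrightarrow> state_polytope {0..n} chain_ideal m =
    (\<lambda>x j. vecsum (T_deg n l ns m) j + x j) `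
      msum {1..l} (\<lambda>k. state_polytope (block k) (block_ideal k) m)"
  unfolding state_polytope_def state_vertices_chain_ideal conv_translate
  by (simp add: conv_msum)

end

theorem theorem1p3:
  fixes n l m :: nat and ns :: "nat \<Rightarrow> nat"
    and X :: "nat \<Rightarrow> (nat \<Rightarrow> 'a::{alg_closed_field, field_char_0}) set"
  assumes l_pos: "l \<ge> 1"
    and ns0: "ns 0 = 0" and ns_mono: "\<forall>i<l. ns i < ns (Suc i)" and nsl: "ns l = n"
    and closed: "\<forall>i\<in>{1..l}. proj_closed n (X i)"
    and chain: "\<forall>i\<in>{1..l}. \<forall>j\<in>{1..l}. i \<noteq> j \<longrightarrow>
                  ((\<exists>p\<in>X i \<inter> X j. p \<noteq> (\<lambda>_. 0)) \<longleftrightarrow> (i = j + 1 \<or> j = i + 1))"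
    and coords: "\<forall>i\<in>{1..l}. \<forall>p\<in>X i. \<forall>j. (j < ns (i - 1) \<or> ns i < j) \<longrightarrow> p j = 0"
    and m_pos: "m > 0"
    and reg_X: "reg_le {0..n} (ideal_of n (\<Union>i\<in>{1..l}. X i)) (int m)"
    and reg_Xi: "\<forall>i\<in>{1..l}. reg_le {0..n} (ideal_of n (X i)) (int m)"
    and reg_Ji: "\<forall>i\<in>{1..l}. reg_le {ns (i - 1)..ns i}
                    (ideal_of n (X i) \<inter> ring_in {ns (i - 1)..ns i}) (int m)"
  shows "state_polytope {0..n} (ideal_of n (\<Union>i\<in>{1..l}. X i)) m =
         (\<lambda>x j. vecsum (T_deg n l ns m) j + x j) `
           msum {1..l} (\<lambda>i. state_polytope {ns (i - 1)..ns i}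
                               (ideal_of n (X i) \<inter> ring_in {ns (i - 1)..ns i}) m)"
proof -
  interpret chain_setting n l ns X
    using l_pos ns0 ns_mono nsl closed chain coords by unfold_locales
  show ?thesis
    using state_polytope_chain_ideal[OF m_pos]
    unfolding chain_ideal_def block_ideal_def block_def .
qed

end
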